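(* Let $k\in\mathbb N^*$, $\alpha\in\mathbb R$, $\kappa>0$ and let $(\mathbf G,\mathcal D(\mathbf G),\mathcal H)$ be the closure of $\mathbf G=-i(\mathbf L\mathbf b^\dagger+\mathbf L^\dagger\mathbf b)-\frac\kappa2\mathbf b^\dagger\mathbf b$ defined on $\mathcal H^{2k,2}$, where $\mathbf L=\mathbf a^k-\alpha^k\mathbf 1$. Then $\mathcal H^{2k,2k}$ is $\mathbf G$-admissible: it is invariant under the contraction semigroup $(e^{t\mathbf G})_{t\ge0}$ generated by $\mathbf G$, and the restriction of this semigroup to $\mathcal H^{2k,2k}$ is a strongly continuous semigroup on $\mathcal H^{2k,2k}$ equipped with its own norm.
   Context: $\mathcal H_a,\mathcal H_b$ are copies of $L^2(\mathbb R,\mathbb C)$, $\mathcal H=\mathcal H_a\otimes\mathcal H_b$ with Fock basis $|n\rangle\otimes|m\rangle$; $\mathbf a,\mathbf b$ are the annihilation operators on the two factors. For $p,q\in\mathbb R$, $\mathcal H^{p,q}=\{\sum_{n,m}\psi_{n,m}|n\rangle\otimes|m\rangle : \sum_{n,m}(1+n^p+m^q)|\psi_{n,m}|^2<\infty\}$ with the inner product $\langle u|v\rangle_{\mathcal H^{p,q}}=\sum(1+n^p+m^q)\overline{u_{n,m}}v_{n,m}$. The closure of $\mathbf G$ generates a strongly continuous contraction semigroup on $\mathcal H$. *)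

theory Defs
  imports "HOL-Analysis.Analysis"
begin

text \<open>Vectors of \<open>H = H_a \<otimes> H_b\<close> are represented by their coefficient functions
  in the Fock basis \<open>|n\<rangle> \<otimes> |m\<rangle>\<close>, i.e. by functions \<open>nat \<times> nat \<Rightarrow> complex\<close>.\<close>

type_synonym fock = "nat \<times> nat \<Rightarrow> complex"

definition wsum :: "(nat \<times> nat \<Rightarrow> real) \<Rightarrow> fock \<Rightarrow> real" where
  "wsum w \<psi> = (\<Sum>\<^sub>\<infinity>x\<in>UNIV. w x * (cmod (\<psi> x))\<^sup>2)"

definition Hspace :: "fock set" where
  "Hspace = {\<psi>. (\<lambda>x. (cmod (\<psi> x))\<^sup>2) summable_on UNIV}"

definition Hnorm :: "fock \<Rightarrow> real" where
  "Hnorm \<psi> = sqrt (wsum (\<lambda>_. 1) \<psi>)"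

definition wpq :: "nat \<Rightarrow> nat \<Rightarrow> nat \<times> nat \<Rightarrow> real" where
  "wpq p q x = 1 + real (fst x) ^ p + real (snd x) ^ q"

definition Hpq :: "nat \<Rightarrow> nat \<Rightarrow> fock set" where
  "Hpq p q = {\<psi>. (\<lambda>x. wpq p q x * (cmod (\<psi> x))\<^sup>2) summable_on UNIV}"

definition Hpq_norm :: "nat \<Rightarrow> nat \<Rightarrow> fock \<Rightarrow> real" where
  "Hpq_norm p q \<psi> = sqrt (wsum (wpq p q) \<psi>)"

definition op_a :: "fock \<Rightarrow> fock" where
  "op_a \<psi> = (\<lambda>(n, m). complex_of_real (sqrt (real (n + 1))) * \<psi> (n + 1, m))"

definition op_adag :: "fock \<Rightarrow> fock" where
  "op_adag \<psi> = (\<lambda>(n, m). if n = 0 then 0 else complex_of_real (sqrt (real n)) * \<psi> (n - 1, m))"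

definition op_b :: "fock \<Rightarrow> fock" where
  "op_b \<psi> = (\<lambda>(n, m). complex_of_real (sqrt (real (m + 1))) * \<psi> (n, m + 1))"

definition op_bdag :: "fock \<Rightarrow> fock" where
  "op_bdag \<psi> = (\<lambda>(n, m). if m = 0 then 0 else complex_of_real (sqrt (real m)) * \<psi> (n, m - 1))"

definition op_L :: "nat \<Rightarrow> real \<Rightarrow> fock \<Rightarrow> fock" where
  "op_L k \<alpha> \<psi> = (\<lambda>x. (op_a ^^ k) \<psi> x - complex_of_real (\<alpha> ^ k) * \<psi> x)"

definition op_Ldag :: "nat \<Rightarrow> real \<Rightarrow> fock \<Rightarrow> fock" where
  "op_Ldag k \<alpha> \<psi> = (\<lambda>x. (op_adag ^^ k) \<psi> x - complex_of_real (\<alpha> ^ k) * \<psi> x)"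

text \<open>\<open>G = -i (L b\<^sup>\<dagger> + L\<^sup>\<dagger> b) - \<kappa>/2 b\<^sup>\<dagger> b\<close>, meant on the domain \<open>H^{2k,2}\<close>.\<close>
definition op_G :: "nat \<Rightarrow> real \<Rightarrow> real \<Rightarrow> fock \<Rightarrow> fock" where
  "op_G k \<alpha> \<kappa> \<psi> = (\<lambda>x. - \<i> * (op_L k \<alpha> (op_bdag \<psi>) x + op_Ldag k \<alpha> (op_b \<psi>) x)
                        - complex_of_real (\<kappa> / 2) * op_bdag (op_b \<psi>) x)"

definition closure_graph :: "fock set \<Rightarrow> (fock \<Rightarrow> fock) \<Rightarrow> (fock \<times> fock) set" where
  "closure_graph D A = {(\<psi>, \<phi>). \<psi> \<in> Hspace \<and> \<phi> \<in> Hspace \<and>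
      (\<exists>s. (\<forall>j. s j \<in> D) \<and>
           (\<lambda>j. Hnorm (\<lambda>x. s j x - \<psi> x)) \<longlonglongrightarrow> 0 \<and>
           (\<lambda>j. Hnorm (\<lambda>x. A (s j) x - \<phi> x)) \<longlonglongrightarrow> 0)}"

definition C0_contraction_semigroup :: "(real \<Rightarrow> fock \<Rightarrow> fock) \<Rightarrow> bool" where
  "C0_contraction_semigroup T \<longleftrightarrow>
     (\<forall>t\<ge>0. \<forall>\<psi>\<in>Hspace. T t \<psi> \<in> Hspace) \<and>
     (\<forall>t\<ge>0. \<forall>\<psi>\<in>Hspace. \<forall>\<phi>\<in>Hspace. \<forall>c.
        T t (\<lambda>x. c * \<psi> x + \<phi> x) = (\<lambda>x. c * T t \<psi> x + T t \<phi> x)) \<and>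
     (\<forall>\<psi>\<in>Hspace. T 0 \<psi> = \<psi>) \<and>
     (\<forall>s\<ge>0. \<forall>t\<ge>0. \<forall>\<psi>\<in>Hspace. T (s + t) \<psi> = T s (T t \<psi>)) \<and>
     (\<forall>t\<ge>0. \<forall>\<psi>\<in>Hspace. Hnorm (T t \<psi>) \<le> Hnorm \<psi>) \<and>
     (\<forall>\<psi>\<in>Hspace. \<forall>t\<ge>0.
        ((\<lambda>s. Hnorm (\<lambda>x. T s \<psi> x - T t \<psi> x)) \<longlongrightarrow> 0) (at t within {0..}))"

definition generator_graph :: "(real \<Rightarrow> fock \<Rightarrow> fock) \<Rightarrow> (fock \<times> fock) set \<Rightarrow> bool" where
  "generator_graph T Gr \<longleftrightarrow>
     (\<forall>\<psi> \<phi>. (\<psi>, \<phi>) \<in> Gr \<longleftrightarrow>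
        \<psi> \<in> Hspace \<and> \<phi> \<in> Hspace \<and>
        ((\<lambda>h. Hnorm (\<lambda>x. (T h \<psi> x - \<psi> x) / complex_of_real h - \<phi> x)) \<longlongrightarrow> 0) (at_right 0))"

definition admissible_restriction ::
  "(real \<Rightarrow> fock \<Rightarrow> fock) \<Rightarrow> fock set \<Rightarrow> (fock \<Rightarrow> real) \<Rightarrow> bool" where
  "admissible_restriction T V N \<longleftrightarrow>
     (\<forall>t\<ge>0. \<forall>\<psi>\<in>V. T t \<psi> \<in> V) \<and>
     (\<forall>t\<ge>0. \<exists>C. \<forall>\<psi>\<in>V. N (T t \<psi>) \<le> C * N \<psi>) \<and>
     (\<forall>\<psi>\<in>V. \<forall>t\<ge>0.
        ((\<lambda>s. N (\<lambda>x. T s \<psi> x - T t \<psi> x)) \<longlongrightarrow> 0) (at t within {0..}))"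

end

theory Submission
  imports Defs
begin

text \<open>
  Let \<open>W(n, m) = (1 + n + k m)^{2k}\<close>; the norm \<open>\<parallel>\<psi>\<parallel>\<^sub>W\<^sup>2 = \<Sum> W(n, m) |\<psi>\<^sub>n\<^sub>m|\<^sup>2\<close> is equivalent
  to that of \<open>H^{2k,2k}\<close>. Since \<open>W(n + k, m) = W(n, m + 1)\<close>, the terms \<open>a\<^sup>k b\<^sup>\<dagger>\<close> and
  \<open>(a\<^sup>\<dagger>)\<^sup>k b\<close> of \<open>G\<close> cancel in \<open>Re \<langle>\<psi>, G \<psi>\<rangle>\<^sub>W\<close>, while the terms involving \<open>\<alpha>\<close> are absorbed
  by the damping \<open>-\<kappa>/2 b\<^sup>\<dagger>b\<close> up to a multiple of \<open>\<parallel>\<psi>\<parallel>\<^sub>W\<^sup>2\<close>; so \<open>Re \<langle>\<psi>, G \<psi>\<rangle>\<^sub>W \<le> c \<parallel>\<psi>\<parallel>\<^sub>W\<^sup>2\<close>.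
  To make this usable, \<open>W\<close> is replaced by its bounded truncations \<open>min W R\<close>, which keep the
  relevant shift properties, and the estimate passes to the closure of \<open>G\<close>. Along an orbit,
  \<open>t \<mapsto> \<parallel>T t \<psi>\<parallel>\<^sub>{min W R}\<^sup>2\<close> then has upper right Dini derivative at most \<open>2 c\<close> times itself, so
  a Gronwall argument bounds it by \<open>e^{(2c + 1) t} \<parallel>\<psi>\<parallel>\<^sub>W\<^sup>2\<close>; letting \<open>R \<rightarrow> \<infinity>\<close> gives invariance
  of \<open>H^{2k,2k}\<close> and an exponential bound. Strong continuity in the weighted norm follows by
  splitting the weight at a truncation level: below it the continuity of \<open>T\<close> in \<open>H\<close> suffices,
  above it the tail is controlled by the exponential bound.
\<close>

lemma infsum_diff:
  fixes f g :: "'a \<Rightarrow> 'b::{topological_ab_group_add, t2_space}"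
  assumes "f summable_on A" "g summable_on A"
  shows "infsum (\<lambda>x. f x - g x) A = infsum f A - infsum g A"
  using infsum_add[OF assms(1) summable_on_uminus[THEN iffD2, OF assms(2)]]
  by (simp add: infsum_uminus)

lemma summable_on_diff:
  fixes f g :: "'a \<Rightarrow> 'b::topological_ab_group_add"
  assumes "f summable_on A" "g summable_on A"
  shows "(\<lambda>x. f x - g x) summable_on A"
  using summable_on_add[OF assms(1) summable_on_uminus[THEN iffD2, OF assms(2)]] by simp

lemma infsum_complex_of_real:
  "infsum (\<lambda>x. complex_of_real (f x)) A = complex_of_real (infsum f A)"
proof (cases "f summable_on A")
  case True
  thus ?thesis by (intro infsumI has_sum_of_real) (simp add: summable_iff_has_sum_infsum)
next
  case False
  hence "\<not> (\<lambda>x. complex_of_real (f x)) summable_on A"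
    using summable_on_Re[of "\<lambda>x. complex_of_real (f x)" A] by auto
  thus ?thesis using False by (simp add: infsum_not_exists)
qed

lemma infsum_cauchy_schwarz:
  fixes f g :: "'a \<Rightarrow> real"
  assumes f0: "\<And>x. f x \<ge> 0" and g0: "\<And>x. g x \<ge> 0"
    and fs: "(\<lambda>x. (f x)\<^sup>2) summable_on UNIV" and gs: "(\<lambda>x. (g x)\<^sup>2) summable_on UNIV"
  shows "(\<lambda>x. f x * g x) summable_on UNIV"
    and "(\<Sum>\<^sub>\<infinity>x. f x * g x) \<le> sqrt (\<Sum>\<^sub>\<infinity>x. (f x)\<^sup>2) * sqrt (\<Sum>\<^sub>\<infinity>x. (g x)\<^sup>2)"
proof -
  have s: "(\<lambda>x. (1/2) * ((f x)\<^sup>2 + (g x)\<^sup>2)) summable_on UNIV"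
    using summable_on_add[OF fs gs] by (rule summable_on_cmult_right)
  show sm: "(\<lambda>x. f x * g x) summable_on UNIV"
  proof (rule summable_on_comparison_test[OF s])
    fix x show "f x * g x \<le> (1/2) * ((f x)\<^sup>2 + (g x)\<^sup>2)"
      using sum_squares_ge_zero[of "f x - g x" 0] by (simp add: power2_eq_square algebra_simps)
    show "0 \<le> f x * g x" using f0 g0 by simp
  qed
  show "(\<Sum>\<^sub>\<infinity>x. f x * g x) \<le> sqrt (\<Sum>\<^sub>\<infinity>x. (f x)\<^sup>2) * sqrt (\<Sum>\<^sub>\<infinity>x. (g x)\<^sup>2)"
  proof (rule infsum_le_finite_sums[OF sm])
    fix F :: "'a set" assume F: "finite F" "F \<subseteq> UNIV"
    have "(\<Sum>x\<in>F. f x * g x) = (\<Sum>x\<in>F. \<bar>f x\<bar> * \<bar>g x\<bar>)" using f0 g0 by simp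
    also have "\<dots> \<le> L2_set f F * L2_set g F" by (rule L2_set_mult_ineq)
    also have "\<dots> \<le> sqrt (\<Sum>\<^sub>\<infinity>x. (f x)\<^sup>2) * sqrt (\<Sum>\<^sub>\<infinity>x. (g x)\<^sup>2)"
      unfolding L2_set_def
      by (intro mult_mono real_sqrt_le_mono finite_sum_le_infsum fs gs F)
         (auto intro: sum_nonneg infsum_nonneg)
    finally show "(\<Sum>x\<in>F. f x * g x) \<le> sqrt (\<Sum>\<^sub>\<infinity>x. (f x)\<^sup>2) * sqrt (\<Sum>\<^sub>\<infinity>x. (g x)\<^sup>2)" .
  qed
qed

lemma infsum_reindex_le:
  fixes f :: "'a \<Rightarrow> real" and g :: "'a \<Rightarrow> 'b" and h :: "'b \<Rightarrow> real"
  assumes inj: "inj_on g A" and out: "\<And>x. x \<notin> A \<Longrightarrow> f x = 0"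
    and f0: "\<And>x. x \<in> A \<Longrightarrow> 0 \<le> f x" and fb: "\<And>x. x \<in> A \<Longrightarrow> f x \<le> C * h (g x)"
    and hs: "h summable_on UNIV" and h0: "\<And>y. 0 \<le> h y" and C0: "C \<ge> 0"
  shows "f summable_on UNIV" "infsum f UNIV \<le> C * infsum h UNIV"
proof -
  have hA: "h summable_on (g ` A)" by (rule summable_on_subset_banach[OF hs]) auto
  hence hgA: "(\<lambda>x. h (g x)) summable_on A" using summable_on_reindex[OF inj, of h] by (simp add: o_def)
  have fA: "f summable_on A"
    by (rule summable_on_comparison_test[OF summable_on_cmult_right[OF hgA, of C]]) (use fb f0 in auto)
  have eq: "infsum f UNIV = infsum f A"
    by (rule infsum_cong_neutral) (use out in auto)
  show "f summable_on UNIV"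
    using fA summable_on_cong_neutral[of A UNIV f f] out by auto
  have "infsum f A \<le> infsum (\<lambda>x. C * h (g x)) A"
    by (rule infsum_mono[OF fA summable_on_cmult_right[OF hgA]]) (use fb in auto)
  also have "\<dots> = C * infsum (\<lambda>x. h (g x)) A" by (rule infsum_cmult_right) (use hgA in auto)
  also have "infsum (\<lambda>x. h (g x)) A = infsum h (g ` A)"
    using infsum_reindex[OF inj, of h] by (simp add: o_def)
  also have "infsum h (g ` A) \<le> infsum h UNIV"
    by (rule infsum_mono_neutral[OF hA hs]) (use h0 in auto)
  finally show "infsum f UNIV \<le> C * infsum h UNIV" using eq C0 by (simp add: mult_left_mono)
qed

lemma cmod_add_sq: "(cmod (a + b))\<^sup>2 = (cmod a)\<^sup>2 + 2 * Re (cnj a * b) + (cmod b)\<^sup>2"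
  unfolding cmod_power2 by (simp add: power2_eq_square algebra_simps)

lemma cmod_add_sq_le: "(cmod (a + b))\<^sup>2 \<le> 2 * (cmod a)\<^sup>2 + 2 * (cmod b)\<^sup>2"
proof -
  have "(cmod (a + b))\<^sup>2 \<le> (cmod a + cmod b)\<^sup>2" by (simp add: norm_triangle_ineq power_mono)
  also have "\<dots> \<le> 2 * (cmod a)\<^sup>2 + 2 * (cmod b)\<^sup>2"
    using sum_squares_ge_zero[of "cmod a - cmod b" 0] by (simp add: power2_eq_square algebra_simps)
  finally show ?thesis .
qed

lemma cmod_diff_sq_le: "(cmod (a - b))\<^sup>2 \<le> 2 * (cmod a)\<^sup>2 + 2 * (cmod b)\<^sup>2"
  using cmod_add_sq_le[of a "- b"] by simp

lemma mult_le_scaled_squares: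
  fixes x y d :: real assumes d: "0 < d"
  shows "x * y \<le> (d * x\<^sup>2 + y\<^sup>2 / d) / 2"
proof -
  have "0 \<le> (d * x - y)\<^sup>2 / d" using d by simp
  also have "(d * x - y)\<^sup>2 / d = d * x\<^sup>2 - 2 * (x * y) + y\<^sup>2 / d"
    using d by (simp add: field_simps power2_eq_square)
  finally show ?thesis by simp
qed

lemma add_power_le:
  fixes a c :: real
  assumes "0 \<le> a" "0 \<le> c"
  shows "(a + c) ^ p \<le> (1 + c) ^ p * (1 + a ^ p)"
proof (cases "a \<le> 1")
  case True
  have "(a + c) ^ p \<le> (1 + c) ^ p" using assms True by (intro power_mono) auto
  also have "\<dots> \<le> (1 + c) ^ p * (1 + a ^ p)" using assms by (simp add: mult_left_le)
  finally show ?thesis .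
next
  case False
  have "a + c \<le> a * (1 + c)" using mult_right_mono[of 1 a c] assms False by (simp add: algebra_simps)
  hence "(a + c) ^ p \<le> (a * (1 + c)) ^ p" using assms by (intro power_mono) auto
  also have "\<dots> = (1 + c) ^ p * a ^ p" by (simp add: power_mult_distrib)
  also have "\<dots> \<le> (1 + c) ^ p * (1 + a ^ p)" using assms by (intro mult_left_mono) auto
  finally show ?thesis .
qed

section \<open>The spaces \<open>H\<close> and \<open>H^{p,q}\<close>, and bounded weights\<close>

lemma Hspace_iff: "f \<in> Hspace \<longleftrightarrow> (\<lambda>x. (cmod (f x))\<^sup>2) summable_on UNIV"
  by (simp add: Hspace_def)

lemma Hnorm_eq: "Hnorm f = sqrt (\<Sum>\<^sub>\<infinity>x. (cmod (f x))\<^sup>2)"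
  by (simp add: Hnorm_def wsum_def)

lemma Hnorm_nonneg: "Hnorm a \<ge> 0"
  by (simp add: Hnorm_eq infsum_nonneg)

lemma Hnorm_sq: "(Hnorm a)\<^sup>2 = (\<Sum>\<^sub>\<infinity>x. (cmod (a x))\<^sup>2)"
  by (simp add: Hnorm_eq infsum_nonneg)

lemma Hnorm_zero: "Hnorm (\<lambda>x. 0) = 0"
  by (simp add: Hnorm_eq)

lemma Hspace_zero: "(\<lambda>x. 0) \<in> Hspace"
  by (simp add: Hspace_iff)

lemma Hspace_add:
  assumes "a \<in> Hspace" "b \<in> Hspace"
  shows "(\<lambda>x. a x + b x) \<in> Hspace"
  unfolding Hspace_iff
  by (rule summable_on_comparison_test[OF summable_on_add[OF assms[unfolded Hspace_iff,
        THEN summable_on_cmult_right[where c=2]]]])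
     (simp_all add: cmod_add_sq_le)

lemma Hspace_scale:
  assumes "a \<in> Hspace" shows "(\<lambda>x. c * a x) \<in> Hspace"
  using summable_on_cmult_right[OF assms[unfolded Hspace_iff], of "(cmod c)\<^sup>2"]
  by (simp add: Hspace_iff norm_mult power_mult_distrib)

lemma Hspace_diff:
  assumes "a \<in> Hspace" "b \<in> Hspace" shows "(\<lambda>x. a x - b x) \<in> Hspace"
  using Hspace_add[OF assms(1) Hspace_scale[OF assms(2), of "-1"]] by simp

lemma Hspace_cauchy_schwarz:
  assumes "a \<in> Hspace" "b \<in> Hspace"
  shows "(\<lambda>x. cmod (a x) * cmod (b x)) summable_on UNIV"
    and "(\<Sum>\<^sub>\<infinity>x. cmod (a x) * cmod (b x)) \<le> Hnorm a * Hnorm b"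
  using infsum_cauchy_schwarz[of "\<lambda>x. cmod (a x)" "\<lambda>x. cmod (b x)"] assms
  by (auto simp: Hspace_iff Hnorm_eq)

lemma Hnorm_triangle:
  assumes "a \<in> Hspace" "b \<in> Hspace"
  shows "Hnorm (\<lambda>x. a x + b x) \<le> Hnorm a + Hnorm b"
proof -
  have sa: "(\<lambda>x. (cmod (a x))\<^sup>2) summable_on UNIV" and sb: "(\<lambda>x. (cmod (b x))\<^sup>2) summable_on UNIV"
    using assms by (auto simp: Hspace_iff)
  note cs = Hspace_cauchy_schwarz[OF assms]
  have sab: "(\<lambda>x. (cmod (a x + b x))\<^sup>2) summable_on UNIV"
    using Hspace_add[OF assms] by (simp add: Hspace_iff)
  have s3: "(\<lambda>x. (cmod (a x))\<^sup>2 + 2 * (cmod (a x) * cmod (b x)) + (cmod (b x))\<^sup>2) summable_on UNIV"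
    by (intro summable_on_add summable_on_cmult_right sa sb cs(1))
  have "(Hnorm (\<lambda>x. a x + b x))\<^sup>2
      \<le> (\<Sum>\<^sub>\<infinity>x. (cmod (a x))\<^sup>2 + 2 * (cmod (a x) * cmod (b x)) + (cmod (b x))\<^sup>2)"
    unfolding Hnorm_sq
  proof (rule infsum_mono[OF sab s3])
    fix x
    have "(cmod (a x + b x))\<^sup>2 \<le> (cmod (a x) + cmod (b x))\<^sup>2"
      by (simp add: norm_triangle_ineq power_mono)
    thus "(cmod (a x + b x))\<^sup>2 \<le> (cmod (a x))\<^sup>2 + 2 * (cmod (a x) * cmod (b x)) + (cmod (b x))\<^sup>2"
      by (simp add: power2_eq_square algebra_simps)
  qed
  also have "\<dots> = (Hnorm a)\<^sup>2 + 2 * (\<Sum>\<^sub>\<infinity>x. cmod (a x) * cmod (b x)) + (Hnorm b)\<^sup>2"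
    unfolding Hnorm_sq
    by (simp add: infsum_add summable_on_add summable_on_cmult_right sa sb cs(1) infsum_cmult_right')
  also have "\<dots> \<le> (Hnorm a + Hnorm b)\<^sup>2"
    using cs(2) by (simp add: power2_eq_square algebra_simps)
  finally show ?thesis
    using Hnorm_nonneg[of a] Hnorm_nonneg[of b] by (simp add: power2_le_iff_abs_le abs_le_iff)
qed

lemma wpq_ge1: "1 \<le> wpq p q x"
  by (simp add: wpq_def)

lemma wpq_nonneg: "0 \<le> wpq p q x"
  using wpq_ge1[of p q x] by linarith

lemma Hpq_subset_Hspace: "s \<in> Hpq p q \<Longrightarrow> s \<in> Hspace"
  unfolding Hpq_def Hspace_iff
  by (rule summable_on_comparison_test[of "\<lambda>x. wpq p q x * (cmod (s x))\<^sup>2"])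
     (use wpq_ge1 in \<open>auto simp: mult_le_cancel_right1\<close>)

lemma wsum_nonneg: "(\<And>x. 0 \<le> w x) \<Longrightarrow> 0 \<le> wsum w s"
  unfolding wsum_def by (intro infsum_nonneg) simp

lemma Hpq_norm_nonneg: "0 \<le> Hpq_norm p q s"
  and Hpq_norm_sq: "(Hpq_norm p q s)\<^sup>2 = wsum (wpq p q) s"
proof -
  have "0 \<le> wsum (wpq p q) s" by (rule wsum_nonneg) (rule wpq_nonneg)
  thus "0 \<le> Hpq_norm p q s" "(Hpq_norm p q s)\<^sup>2 = wsum (wpq p q) s"
    by (simp_all add: Hpq_norm_def)
qed

lemma Hpq_iff: "s \<in> Hpq p q \<longleftrightarrow> (\<lambda>x. wpq p q x * (cmod (s x))\<^sup>2) summable_on UNIV"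
  by (simp add: Hpq_def)

lemma weighted_summable_diff:
  fixes w :: "'a \<Rightarrow> real"
  assumes w0: "\<And>x. 0 \<le> w x" and a: "(\<lambda>x. w x * (cmod (a x))\<^sup>2) summable_on UNIV"
    and b: "(\<lambda>x. w x * (cmod (b x))\<^sup>2) summable_on UNIV"
  shows "(\<lambda>x. w x * (cmod (a x - b x))\<^sup>2) summable_on UNIV"
proof (rule summable_on_comparison_test[OF summable_on_add[OF summable_on_cmult_right[OF a, of 2]
      summable_on_cmult_right[OF b, of 2]]])
  fix x
  have "w x * (cmod (a x - b x))\<^sup>2 \<le> w x * (2 * (cmod (a x))\<^sup>2 + 2 * (cmod (b x))\<^sup>2)"
    using w0 cmod_diff_sq_le by (intro mult_left_mono) auto
  thus "w x * (cmod (a x - b x))\<^sup>2 \<le> 2 * (w x * (cmod (a x))\<^sup>2) + 2 * (w x * (cmod (b x))\<^sup>2)"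
    by (simp add: algebra_simps)
  show "0 \<le> w x * (cmod (a x - b x))\<^sup>2" using w0 by simp
qed

lemma Hpq_diff: "a \<in> Hpq p q \<Longrightarrow> b \<in> Hpq p q \<Longrightarrow> (\<lambda>x. a x - b x) \<in> Hpq p q"
  unfolding Hpq_iff by (rule weighted_summable_diff[OF wpq_nonneg])

lemma Hpq_2k_subset:
  assumes k: "k \<ge> 1" and s: "s \<in> Hpq (2 * k) (2 * k)"
  shows "s \<in> Hpq (2 * k) 2"
  unfolding Hpq_iff
proof (rule summable_on_comparison_test[OF summable_on_cmult_right[OF s[unfolded Hpq_iff], of 2]])
  fix x :: "nat \<times> nat"
  obtain n m where x: "x = (n, m)" by fastforce
  have "(real m)\<^sup>2 \<le> 1 + real m ^ (2 * k)"
  proof (cases "m = 0")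
    case False
    hence "real m ^ 2 \<le> real m ^ (2 * k)" using k by (intro power_increasing) auto
    thus ?thesis by simp
  qed simp
  moreover have "0 \<le> real n ^ (2 * k)" "0 \<le> real m ^ (2 * k)" by simp_all
  moreover have "wpq (2 * k) 2 x = 1 + real n ^ (2 * k) + (real m)\<^sup>2" by (simp add: wpq_def x)
  moreover have "wpq (2 * k) (2 * k) x = 1 + real n ^ (2 * k) + real m ^ (2 * k)" by (simp add: wpq_def x)
  ultimately have "wpq (2 * k) 2 x \<le> 2 * wpq (2 * k) (2 * k) x" by linarith
  hence "wpq (2 * k) 2 x * (cmod (s x))\<^sup>2 \<le> (2 * wpq (2 * k) (2 * k) x) * (cmod (s x))\<^sup>2"
    by (rule mult_right_mono) simp
  thus "wpq (2 * k) 2 x * (cmod (s x))\<^sup>2 \<le> 2 * (wpq (2 * k) (2 * k) x * (cmod (s x))\<^sup>2)"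
    by (simp add: mult.assoc)
  show "0 \<le> wpq (2 * k) 2 x * (cmod (s x))\<^sup>2" by (simp add: wpq_nonneg)
qed

definition weighted_inner :: "(nat \<times> nat \<Rightarrow> real) \<Rightarrow> fock \<Rightarrow> fock \<Rightarrow> complex" where
  "weighted_inner V a b = (\<Sum>\<^sub>\<infinity>x. complex_of_real (V x) * cnj (a x) * b x)"

lemma weighted_inner_self: "weighted_inner V a a = complex_of_real (wsum V a)"
proof -
  have "weighted_inner V a a = (\<Sum>\<^sub>\<infinity>x. complex_of_real (V x * (cmod (a x))\<^sup>2))"
    unfolding weighted_inner_def
  proof (rule infsum_cong)
    fix x
    have "cnj (a x) * a x = complex_of_real ((cmod (a x))\<^sup>2)"
      using complex_norm_square[of "a x"] by (simp only: mult.commute)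
    thus "complex_of_real (V x) * cnj (a x) * a x = complex_of_real (V x * (cmod (a x))\<^sup>2)"
      by (simp add: mult.assoc)
  qed
  also have "\<dots> = complex_of_real (wsum V a)"
    unfolding wsum_def by (rule infsum_complex_of_real)
  finally show ?thesis .
qed

locale bounded_weight =
  fixes V :: "nat \<times> nat \<Rightarrow> real" and R :: real
  assumes nonneg: "0 \<le> V x" and bounded: "V x \<le> R"
begin

lemma R_nonneg: "0 \<le> R"
  using nonneg bounded order_trans by blast

lemma wsum_summable:
  assumes "a \<in> Hspace" shows "(\<lambda>x. V x * (cmod (a x))\<^sup>2) summable_on UNIV"
  by (rule summable_on_comparison_test[OF summable_on_cmult_right[OF assms[unfolded Hspace_iff], of R]])
     (use nonneg bounded in \<open>auto intro: mult_right_mono\<close>)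

lemma wsum_le:
  assumes "a \<in> Hspace" shows "wsum V a \<le> R * (Hnorm a)\<^sup>2"
proof -
  have "wsum V a \<le> (\<Sum>\<^sub>\<infinity>x. R * (cmod (a x))\<^sup>2)"
    unfolding wsum_def
    by (rule infsum_mono[OF wsum_summable[OF assms] summable_on_cmult_right[OF assms[unfolded Hspace_iff]]])
       (use nonneg bounded in \<open>auto intro: mult_right_mono\<close>)
  also have "\<dots> = R * (Hnorm a)\<^sup>2" by (simp add: infsum_cmult_right' Hnorm_sq)
  finally show ?thesis .
qed

lemma weighted_inner_abs_summable:
  assumes "a \<in> Hspace" "b \<in> Hspace"
  shows "(\<lambda>x. cmod (complex_of_real (V x) * cnj (a x) * b x)) summable_on UNIV"
proof -
  have "cmod (complex_of_real (V x) * cnj (a x) * b x) \<le> R * (cmod (a x) * cmod (b x))" for x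
    using mult_right_mono[OF bounded[of x], of "cmod (a x) * cmod (b x)"] nonneg[of x]
    by (simp add: norm_mult abs_of_nonneg mult.assoc)
  thus ?thesis
    by (intro summable_on_comparison_test[OF summable_on_cmult_right[OF Hspace_cauchy_schwarz(1)[OF assms]]])
       auto
qed

lemma weighted_inner_summable:
  "a \<in> Hspace \<Longrightarrow> b \<in> Hspace \<Longrightarrow> (\<lambda>x. complex_of_real (V x) * cnj (a x) * b x) summable_on UNIV"
  using weighted_inner_abs_summable summable_on_iff_abs_summable_on_complex by blast

lemma norm_weighted_inner_le:
  assumes "a \<in> Hspace" "b \<in> Hspace"
  shows "cmod (weighted_inner V a b) \<le> R * (Hnorm a * Hnorm b)"
proof -
  note cs = Hspace_cauchy_schwarz[OF assms]
  have "cmod (weighted_inner V a b) \<le> (\<Sum>\<^sub>\<infinity>x. cmod (complex_of_real (V x) * cnj (a x) * b x))"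
    unfolding weighted_inner_def by (rule norm_infsum_bound) (use weighted_inner_abs_summable[OF assms] in simp)
  also have "\<dots> \<le> (\<Sum>\<^sub>\<infinity>x. R * (cmod (a x) * cmod (b x)))"
    using mult_right_mono[OF bounded, of "cmod (a _) * cmod (b _)"] nonneg
    by (intro infsum_mono[OF weighted_inner_abs_summable[OF assms] summable_on_cmult_right[OF cs(1)]])
       (simp add: norm_mult abs_of_nonneg mult.assoc)
  also have "\<dots> \<le> R * (Hnorm a * Hnorm b)"
    using cs(2) R_nonneg by (simp add: infsum_cmult_right' mult_left_mono[of _ _ R])
  finally show ?thesis .
qed

lemma weighted_inner_add3:
  assumes "a \<in> Hspace" "b1 \<in> Hspace" "b2 \<in> Hspace" "b3 \<in> Hspace"
  shows "weighted_inner V a (\<lambda>x. c1 * b1 x + c2 * b2 x + b3 x) = c1 * weighted_inner V a b1 + c2 * weighted_inner V a b2 + weighted_inner V a b3"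
proof -
  note s = weighted_inner_summable[OF assms(1,2)] weighted_inner_summable[OF assms(1,3)] weighted_inner_summable[OF assms(1,4)]
  have "weighted_inner V a (\<lambda>x. c1 * b1 x + c2 * b2 x + b3 x) =
     (\<Sum>\<^sub>\<infinity>x. c1 * (complex_of_real (V x) * cnj (a x) * b1 x) + c2 * (complex_of_real (V x) * cnj (a x) * b2 x)
            + complex_of_real (V x) * cnj (a x) * b3 x)"
    unfolding weighted_inner_def by (rule infsum_cong) (simp add: algebra_simps)
  also have "\<dots> = c1 * weighted_inner V a b1 + c2 * weighted_inner V a b2 + weighted_inner V a b3"
    unfolding weighted_inner_def by (simp add: infsum_add summable_on_add summable_on_cmult_right s infsum_cmult_right')
  finally show ?thesis .
qed

lemma weighted_inner_diff_right:
  assumes "u \<in> Hspace" "a \<in> Hspace" "b \<in> Hspace"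
  shows "weighted_inner V u (\<lambda>x. a x - b x) = weighted_inner V u a - weighted_inner V u b"
  using weighted_inner_add3[OF assms(1,2) assms(3) Hspace_zero, of 1 "-1"] by (simp add: weighted_inner_def)

lemma weighted_inner_diff_left:
  assumes "a \<in> Hspace" "a' \<in> Hspace" "b \<in> Hspace"
  shows "weighted_inner V (\<lambda>x. a' x - a x) b = weighted_inner V a' b - weighted_inner V a b"
proof -
  have "weighted_inner V (\<lambda>x. a' x - a x) b =
        (\<Sum>\<^sub>\<infinity>x. complex_of_real (V x) * cnj (a' x) * b x - complex_of_real (V x) * cnj (a x) * b x)"
    unfolding weighted_inner_def by (rule infsum_cong) (simp add: algebra_simps)
  thus ?thesis
    unfolding weighted_inner_def by (simp add: infsum_diff weighted_inner_summable assms)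
qed

lemma tendsto_weighted_inner:
  assumes H: "a \<in> Hspace" "b \<in> Hspace" and Hev: "eventually (\<lambda>j. a' j \<in> Hspace \<and> b' j \<in> Hspace) F"
    and la: "((\<lambda>j. Hnorm (\<lambda>x. a' j x - a x)) \<longlongrightarrow> 0) F"
    and lb: "((\<lambda>j. Hnorm (\<lambda>x. b' j x - b x)) \<longlongrightarrow> 0) F"
  shows "((\<lambda>j. weighted_inner V (a' j) (b' j)) \<longlongrightarrow> weighted_inner V a b) F"
proof -
  define Ea where "Ea j = Hnorm (\<lambda>x. a' j x - a x)" for j
  define Eb where "Eb j = Hnorm (\<lambda>x. b' j x - b x)" for j
  have bnd: "cmod (weighted_inner V (a' j) (b' j) - weighted_inner V a b) \<le> R * (Ea j * (Hnorm b + Eb j)) + R * (Hnorm a * Eb j)"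
    if Hj: "a' j \<in> Hspace" "b' j \<in> Hspace" for j
  proof -
    have H2: "(\<lambda>x. a' j x - a x) \<in> Hspace" "(\<lambda>x. b' j x - b x) \<in> Hspace"
      by (rule Hspace_diff[OF Hj(1) H(1)], rule Hspace_diff[OF Hj(2) H(2)])
    have tb: "Hnorm (b' j) \<le> Hnorm b + Eb j"
      using Hnorm_triangle[OF H(2) H2(2)] by (simp add: Eb_def)
    have "weighted_inner V (a' j) (b' j) - weighted_inner V a b
        = weighted_inner V (\<lambda>x. a' j x - a x) (b' j) + weighted_inner V a (\<lambda>x. b' j x - b x)"
      using weighted_inner_diff_left[OF H(1) Hj(1,2)] weighted_inner_diff_right[OF H(1) Hj(2) H(2)] by simp
    hence "cmod (weighted_inner V (a' j) (b' j) - weighted_inner V a b)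
        \<le> cmod (weighted_inner V (\<lambda>x. a' j x - a x) (b' j)) + cmod (weighted_inner V a (\<lambda>x. b' j x - b x))"
      by (simp only: norm_triangle_ineq)
    also have "\<dots> \<le> R * (Ea j * Hnorm (b' j)) + R * (Hnorm a * Eb j)"
      unfolding Ea_def Eb_def by (intro add_mono norm_weighted_inner_le H H2 Hj)
    also have "\<dots> \<le> R * (Ea j * (Hnorm b + Eb j)) + R * (Hnorm a * Eb j)"
      using tb R_nonneg Hnorm_nonneg unfolding Ea_def by (intro add_mono mult_left_mono) auto
    finally show ?thesis .
  qed
  have "((\<lambda>j. R * (Ea j * (Hnorm b + Eb j)) + R * (Hnorm a * Eb j)) \<longlongrightarrow>
        R * (0 * (Hnorm b + 0)) + R * (Hnorm a * 0)) F"
    unfolding Ea_def Eb_def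
    by (rule tendsto_add[OF tendsto_mult[OF tendsto_const tendsto_mult[OF la tendsto_add[OF tendsto_const lb]]]
                            tendsto_mult[OF tendsto_const tendsto_mult[OF tendsto_const lb]]])
  hence "((\<lambda>j. R * (Ea j * (Hnorm b + Eb j)) + R * (Hnorm a * Eb j)) \<longlongrightarrow> 0) F"
    by simp
  hence "((\<lambda>j. weighted_inner V (a' j) (b' j) - weighted_inner V a b) \<longlongrightarrow> 0) F"
    by (rule Lim_null_comparison[OF eventually_mono[OF Hev], rotated]) (use bnd in auto)
  thus ?thesis by (simp add: LIM_zero_iff)
qed

lemma wsum_add_scaled:
  assumes u: "u \<in> Hspace" and w: "w \<in> Hspace"
  shows "wsum V (\<lambda>x. u x + complex_of_real h * w x) = wsum V u + 2 * h * Re (weighted_inner V u w) + h\<^sup>2 * wsum V w"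
proof -
  note s1 = wsum_summable[OF u] and s3 = wsum_summable[OF w]
  have s2: "(\<lambda>x. Re (complex_of_real (V x) * cnj (u x) * w x)) summable_on UNIV"
    by (rule summable_on_Re[OF weighted_inner_summable[OF u w]])
  have "wsum V (\<lambda>x. u x + complex_of_real h * w x)
     = (\<Sum>\<^sub>\<infinity>x. V x * (cmod (u x))\<^sup>2 + (2 * h) * Re (complex_of_real (V x) * cnj (u x) * w x)
          + h\<^sup>2 * (V x * (cmod (w x))\<^sup>2))"
    unfolding wsum_def
  proof (rule infsum_cong)
    fix x
    have "Re (cnj (u x) * (complex_of_real h * w x)) = h * Re (cnj (u x) * w x)" by (simp add: algebra_simps)
    moreover have "Re (complex_of_real (V x) * cnj (u x) * w x) = V x * Re (cnj (u x) * w x)"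
      by (simp add: mult.assoc)
    ultimately show "V x * (cmod (u x + complex_of_real h * w x))\<^sup>2
      = V x * (cmod (u x))\<^sup>2 + (2 * h) * Re (complex_of_real (V x) * cnj (u x) * w x) + h\<^sup>2 * (V x * (cmod (w x))\<^sup>2)"
      by (simp add: cmod_add_sq norm_mult power_mult_distrib algebra_simps)
  qed
  also have "\<dots> = wsum V u + 2 * h * (\<Sum>\<^sub>\<infinity>x. Re (complex_of_real (V x) * cnj (u x) * w x)) + h\<^sup>2 * wsum V w"
    unfolding wsum_def
    by (subst infsum_add, intro summable_on_add summable_on_cmult_right s1 s2, intro summable_on_cmult_right s3,
        subst infsum_add, rule s1, intro summable_on_cmult_right s2, simp only: infsum_cmult_right')
  also have "(\<Sum>\<^sub>\<infinity>x. Re (complex_of_real (V x) * cnj (u x) * w x)) = Re (weighted_inner V u w)"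
    unfolding weighted_inner_def by (rule infsum_Re[OF weighted_inner_summable[OF u w]])
  finally show ?thesis .
qed

lemma wsum_add_scaled_le:
  assumes u: "u \<in> Hspace" and v: "v \<in> Hspace" and w: "w \<in> Hspace" and h: "0 \<le> h"
    and Re_le: "Re (weighted_inner V u v) \<le> c * wsum V u"
  shows "wsum V (\<lambda>x. u x + complex_of_real h * w x) \<le> wsum V u
           + (2 * c * wsum V u + 2 * R * Hnorm u * Hnorm (\<lambda>x. w x - v x)
              + h * R * (Hnorm v + Hnorm (\<lambda>x. w x - v x))\<^sup>2) * h"
proof -
  have wv: "(\<lambda>x. w x - v x) \<in> Hspace" by (rule Hspace_diff[OF w v])
  have "Re (weighted_inner V u w) = Re (weighted_inner V u v) + Re (weighted_inner V u (\<lambda>x. w x - v x))"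
    using weighted_inner_diff_right[OF u w v] by simp
  also have "\<dots> \<le> c * wsum V u + R * (Hnorm u * Hnorm (\<lambda>x. w x - v x))"
    using Re_le complex_Re_le_cmod[of "weighted_inner V u (\<lambda>x. w x - v x)"] norm_weighted_inner_le[OF u wv]
    by linarith
  finally have r1: "Re (weighted_inner V u w) \<le> c * wsum V u + R * (Hnorm u * Hnorm (\<lambda>x. w x - v x))" .
  have "Hnorm w \<le> Hnorm v + Hnorm (\<lambda>x. w x - v x)"
    using Hnorm_triangle[OF v wv] by simp
  hence "(Hnorm w)\<^sup>2 \<le> (Hnorm v + Hnorm (\<lambda>x. w x - v x))\<^sup>2"
    using Hnorm_nonneg[of w] by (simp add: power_mono)
  hence r2: "wsum V w \<le> R * (Hnorm v + Hnorm (\<lambda>x. w x - v x))\<^sup>2"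
    using wsum_le[OF w] R_nonneg by (meson mult_left_mono order_trans)
  have "wsum V (\<lambda>x. u x + complex_of_real h * w x)
      \<le> wsum V u + 2 * h * (c * wsum V u + R * (Hnorm u * Hnorm (\<lambda>x. w x - v x)))
         + h\<^sup>2 * (R * (Hnorm v + Hnorm (\<lambda>x. w x - v x))\<^sup>2)"
    unfolding wsum_add_scaled[OF u w] using r1 r2 h by (intro add_mono mult_left_mono) auto
  thus ?thesis by (simp add: power2_eq_square algebra_simps)
qed
end

section \<open>Ladder operators\<close>

lemma op_a_funpow:
  "(op_a ^^ j) f (n, m) = complex_of_real (sqrt (pochhammer (real n + 1) j)) * f (n + j, m)"
proof (induction j arbitrary: f)
  case 0 thus ?case by simp
next
  case (Suc j)
  have "(op_a ^^ Suc j) f (n, m) = (op_a ^^ j) (op_a f) (n, m)"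
    by (simp add: funpow_Suc_right del: funpow.simps)
  also have "\<dots> = complex_of_real (sqrt (pochhammer (real n + 1) j) * sqrt (real (n + j + 1))) * f (n + Suc j, m)"
    by (simp add: Suc op_a_def mult.assoc)
  also have "sqrt (pochhammer (real n + 1) j) * sqrt (real (n + j + 1)) = sqrt (pochhammer (real n + 1) (Suc j))"
    by (simp add: pochhammer_Suc real_sqrt_mult add_ac)
  finally show ?case .
qed

lemma op_adag_funpow:
  "(op_adag ^^ j) f (n, m) =
     (if n < j then 0 else complex_of_real (sqrt (pochhammer (real (n - j) + 1) j)) * f (n - j, m))"
proof (induction j arbitrary: f n)
  case 0 thus ?case by simp
next
  case (Suc j)
  have "(op_adag ^^ Suc j) f (n, m) = (op_adag ^^ j) (op_adag f) (n, m)"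
    by (simp add: funpow_Suc_right del: funpow.simps)
  also have "\<dots> = (if n < Suc j then 0
      else complex_of_real (sqrt (pochhammer (real (n - Suc j) + 1) (Suc j))) * f (n - Suc j, m))"
  proof (cases "n < Suc j")
    case True thus ?thesis by (cases "n < j") (auto simp: Suc op_adag_def)
  next
    case False
    have "pochhammer (real (n - Suc j) + 1) (Suc j) = real (n - j) * pochhammer (real (n - j) + 1) j"
      using False by (simp add: pochhammer_rec Suc_diff_Suc of_nat_diff)
    moreover have "n - j - 1 = n - Suc j" by simp
    ultimately show ?thesis
      using False by (simp add: Suc op_adag_def real_sqrt_mult mult_ac)
  qed
  finally show ?case .
qed

lemma pochhammer_of_nat_le: "pochhammer (real n + 1) j \<le> real (n + j) ^ j"
proof -
  have "pochhammer (real n + 1) j \<le> (\<Prod>i<j. real (n + j))"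
    unfolding pochhammer_prod atLeast0LessThan by (rule prod_mono) auto
  thus ?thesis by simp
qed

definition op_ak_bdag :: "nat \<Rightarrow> fock \<Rightarrow> fock" where
  "op_ak_bdag k s = (op_a ^^ k) (op_bdag s)"

definition op_adagk_b :: "nat \<Rightarrow> fock \<Rightarrow> fock" where
  "op_adagk_b k s = (op_adag ^^ k) (op_b s)"

lemma op_G_expand:
  "op_G k \<alpha> \<kappa> s x =
     - \<i> * ((op_ak_bdag k s x - complex_of_real (\<alpha> ^ k) * op_bdag s x)
            + (op_adagk_b k s x - complex_of_real (\<alpha> ^ k) * op_b s x))
     - complex_of_real (\<kappa> / 2) * op_bdag (op_b s) x"
  by (simp add: op_G_def op_L_def op_Ldag_def op_ak_bdag_def op_adagk_b_def)

lemma op_ak_bdag_apply: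
  "op_ak_bdag k s (n, m) = (if m = 0 then 0
     else complex_of_real (sqrt (pochhammer (real n + 1) k) * sqrt (real m)) * s (n + k, m - 1))"
  by (simp add: op_ak_bdag_def op_a_funpow op_bdag_def)

lemma op_adagk_b_apply:
  "op_adagk_b k s (n, m) = (if n < k then 0
     else complex_of_real (sqrt (pochhammer (real (n - k) + 1) k) * sqrt (real (m + 1))) * s (n - k, m + 1))"
  by (simp add: op_adagk_b_def op_adag_funpow op_b_def)

lemma op_bdag_apply:
  "op_bdag s (n, m) = (if m = 0 then 0 else complex_of_real (sqrt (real m)) * s (n, m - 1))"
  by (simp add: op_bdag_def)

lemma op_b_apply: "op_b s (n, m) = complex_of_real (sqrt (real (m + 1))) * s (n, m + 1)"
  by (simp add: op_b_def)

lemma op_bdag_b_apply: "op_bdag (op_b s) (n, m) = complex_of_real (real m) * s (n, m)"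
proof -
  have "complex_of_real (sqrt (real m)) * complex_of_real (sqrt (real m)) = complex_of_real (real m)"
    by (simp flip: of_real_mult)
  thus ?thesis by (simp add: op_bdag_def op_b_def mult.assoc[symmetric])
qed

definition ladder_const :: "nat \<Rightarrow> real" where
  "ladder_const k = (1 + real k) ^ (2 * k)"

lemma ladder_const_ge: "k \<ge> 1 \<Longrightarrow> 2 \<le> ladder_const k"
  using power_increasing[of 1 "2 * k" "1 + real k"] by (simp add: ladder_const_def)

lemma power2_power_eq: "(x ^ k)\<^sup>2 = (x::real) ^ (2 * k)"
  by (simp only: power_mult[symmetric] mult.commute[of k 2])

lemma ak_bdag_coeff_le:
  assumes "1 \<le> m"
  shows "real (n + k) ^ k * real m \<le> wpq (2 * k) 2 (n + k, m - 1)"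
proof -
  define r where "r = real (m - 1)"
  have m: "real m = r + 1" using assms by (simp add: r_def)
  have "real (n + k) ^ k * real m \<le> ((real (n + k) ^ k)\<^sup>2 + (real m)\<^sup>2) / 2"
    using mult_le_scaled_squares[of 1] by simp
  also have "\<dots> \<le> (real (n + k) ^ (2 * k) + (2 * r\<^sup>2 + 2)) / 2"
  proof -
    have "(real m)\<^sup>2 \<le> 2 * r\<^sup>2 + 2"
      unfolding m using sum_squares_ge_zero[of "r - 1" 0] by (simp add: power2_eq_square algebra_simps)
    thus ?thesis unfolding power2_power_eq by (intro divide_right_mono add_left_mono) auto
  qed
  also have "\<dots> \<le> wpq (2 * k) 2 (n + k, m - 1)" by (simp add: wpq_def r_def)
  finally show ?thesis .
qed

lemma adagk_b_coeff_le:
  assumes "k \<le> n"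
  shows "real n ^ k * real (m + 1) \<le> ladder_const k * wpq (2 * k) 2 (n - k, m + 1)"
proof -
  have C1: "1 \<le> ladder_const k" unfolding ladder_const_def by (rule one_le_power) simp
  have "real n ^ k * real (m + 1) \<le> ((real n ^ k)\<^sup>2 + (real (m + 1))\<^sup>2) / 2"
    using mult_le_scaled_squares[of 1] by simp
  also have "\<dots> \<le> (ladder_const k * (1 + real (n - k) ^ (2 * k)) + ladder_const k * (real (m + 1))\<^sup>2) / 2"
  proof -
    have p: "real n ^ (2 * k) \<le> ladder_const k * (1 + real (n - k) ^ (2 * k))"
      using add_power_le[of "real (n - k)" "real k" "2 * k"] assms by (simp add: ladder_const_def of_nat_diff)
    have q: "(real (m + 1))\<^sup>2 \<le> ladder_const k * (real (m + 1))\<^sup>2"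
      using C1 by (simp add: mult_le_cancel_right1)
    show ?thesis
      by (intro divide_right_mono) (use add_mono[OF p q] in \<open>simp_all add: power2_power_eq\<close>)
  qed
  also have "\<dots> \<le> ladder_const k * wpq (2 * k) 2 (n - k, m + 1)"
    using C1 by (simp add: wpq_def field_simps)
  finally show ?thesis .
qed

lemma Hspace_reindex_dominated:
  assumes inj: "inj_on g A" and out: "\<And>x. x \<notin> A \<Longrightarrow> f x = 0"
    and dom: "\<And>x. x \<in> A \<Longrightarrow> (cmod (f x))\<^sup>2 \<le> C * (w (g x) * (cmod (s (g x)))\<^sup>2)"
    and s: "(\<lambda>x. w x * (cmod (s x))\<^sup>2) summable_on UNIV" and w0: "\<And>x. 0 \<le> w x" and C0: "0 \<le> C"
  shows "f \<in> Hspace"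
  unfolding Hspace_iff
  by (rule infsum_reindex_le(1)[where h="\<lambda>x. w x * (cmod (s x))\<^sup>2" and f="\<lambda>x. (cmod (f x))\<^sup>2",
        OF inj _ _ dom s _ C0]) (use out w0 in auto)

context
  fixes k :: nat and s :: fock
  assumes k: "k \<ge> 1" and s: "s \<in> Hpq (2 * k) 2"
begin

lemma op_ak_bdag_in_Hspace: "op_ak_bdag k s \<in> Hspace"
proof (rule Hspace_reindex_dominated[OF _ _ _ s[unfolded Hpq_iff], where C=1 and A="{x. 1 \<le> snd x}"])
  show "inj_on (\<lambda>(n::nat, m::nat). (n + k, m - 1)) {x. 1 \<le> snd x}"
    unfolding inj_on_def split_paired_all by simp arith
  fix x :: "nat \<times> nat"
  obtain n m where x: "x = (n, m)" by fastforce
  show "x \<notin> {x. 1 \<le> snd x} \<Longrightarrow> op_ak_bdag k s x = 0" by (simp add: x op_ak_bdag_apply)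
  assume "x \<in> {x. 1 \<le> snd x}"
  hence m: "1 \<le> m" by (simp add: x)
  have "(cmod (op_ak_bdag k s x))\<^sup>2 = pochhammer (real n + 1) k * real m * (cmod (s (n + k, m - 1)))\<^sup>2"
    using m by (simp add: x op_ak_bdag_apply norm_mult power_mult_distrib pochhammer_nonneg)
  also have "\<dots> \<le> real (n + k) ^ k * real m * (cmod (s (n + k, m - 1)))\<^sup>2"
    by (intro mult_right_mono pochhammer_of_nat_le) auto
  also have "\<dots> \<le> wpq (2 * k) 2 (n + k, m - 1) * (cmod (s (n + k, m - 1)))\<^sup>2"
    by (intro mult_right_mono ak_bdag_coeff_le m) auto
  finally show "(cmod (op_ak_bdag k s x))\<^sup>2 \<le> 1 * (wpq (2 * k) 2 ((\<lambda>(n, m). (n + k, m - 1)) x)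
      * (cmod (s ((\<lambda>(n, m). (n + k, m - 1)) x)))\<^sup>2)" by (simp add: x)
qed (simp_all add: wpq_nonneg)

lemma op_adagk_b_in_Hspace: "op_adagk_b k s \<in> Hspace"
proof (rule Hspace_reindex_dominated[OF _ _ _ s[unfolded Hpq_iff], where C="ladder_const k" and A="{x. k \<le> fst x}"])
  show "inj_on (\<lambda>(n::nat, m::nat). (n - k, m + 1)) {x. k \<le> fst x}"
    unfolding inj_on_def split_paired_all by simp arith
  fix x :: "nat \<times> nat"
  obtain n m where x: "x = (n, m)" by fastforce
  show "x \<notin> {x. k \<le> fst x} \<Longrightarrow> op_adagk_b k s x = 0" by (simp add: x op_adagk_b_apply)
  assume "x \<in> {x. k \<le> fst x}"
  hence n: "k \<le> n" by (simp add: x)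
  have "(cmod (op_adagk_b k s x))\<^sup>2 = pochhammer (real (n - k) + 1) k * real (m + 1) * (cmod (s (n - k, m + 1)))\<^sup>2"
    using n by (simp add: x op_adagk_b_apply norm_mult power_mult_distrib pochhammer_nonneg)
  also have "\<dots> \<le> real n ^ k * real (m + 1) * (cmod (s (n - k, m + 1)))\<^sup>2"
    using pochhammer_of_nat_le[of "n - k" k] n by (intro mult_right_mono) auto
  also have "\<dots> \<le> ladder_const k * wpq (2 * k) 2 (n - k, m + 1) * (cmod (s (n - k, m + 1)))\<^sup>2"
    by (intro mult_right_mono adagk_b_coeff_le n) auto
  finally show "(cmod (op_adagk_b k s x))\<^sup>2 \<le> ladder_const k * (wpq (2 * k) 2 ((\<lambda>(n, m). (n - k, m + 1)) x)
      * (cmod (s ((\<lambda>(n, m). (n - k, m + 1)) x)))\<^sup>2)" by (simp add: x mult.assoc)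
qed (simp_all add: wpq_nonneg ladder_const_def)

lemma op_bdag_in_Hspace: "op_bdag s \<in> Hspace"
proof (rule Hspace_reindex_dominated[OF _ _ _ s[unfolded Hpq_iff], where C=2 and A="{x. 1 \<le> snd x}"])
  show "inj_on (\<lambda>(n::nat, m::nat). (n, m - 1)) {x. 1 \<le> snd x}"
    unfolding inj_on_def split_paired_all by simp arith
  fix x :: "nat \<times> nat"
  obtain n m where x: "x = (n, m)" by fastforce
  show "x \<notin> {x. 1 \<le> snd x} \<Longrightarrow> op_bdag s x = 0" by (simp add: x op_bdag_apply)
  assume "x \<in> {x. 1 \<le> snd x}"
  hence m: "1 \<le> m" by (simp add: x)
  have "real m \<le> 2 * wpq (2 * k) 2 (n, m - 1)"
  proof -
    define r where "r = real (m - 1)"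
    have "real m = r + 1" using m by (simp add: r_def)
    moreover have "r \<le> r\<^sup>2 + 1/4"
      using sum_squares_ge_zero[of "r - 1/2" 0] by (simp add: power2_eq_square algebra_simps)
    moreover have "wpq (2 * k) 2 (n, m - 1) = 1 + real n ^ (2 * k) + r\<^sup>2" by (simp add: wpq_def r_def)
    moreover have "0 \<le> real n ^ (2 * k)" "0 \<le> r\<^sup>2" by simp_all
    ultimately show ?thesis by linarith
  qed
  hence "real m * (cmod (s (n, m - 1)))\<^sup>2 \<le> 2 * wpq (2 * k) 2 (n, m - 1) * (cmod (s (n, m - 1)))\<^sup>2"
    by (intro mult_right_mono) auto
  thus "(cmod (op_bdag s x))\<^sup>2 \<le> 2 * (wpq (2 * k) 2 ((\<lambda>(n, m). (n, m - 1)) x)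
      * (cmod (s ((\<lambda>(n, m). (n, m - 1)) x)))\<^sup>2)"
    using m by (simp add: x op_bdag_apply norm_mult power_mult_distrib mult.assoc)
qed (simp_all add: wpq_nonneg)

lemma op_b_in_Hspace: "op_b s \<in> Hspace"
proof (rule Hspace_reindex_dominated[OF _ _ _ s[unfolded Hpq_iff], where C=1 and A=UNIV])
  show "inj_on (\<lambda>(n::nat, m::nat). (n, m + 1)) UNIV"
    unfolding inj_on_def split_paired_all by simp
  fix x :: "nat \<times> nat"
  obtain n m where x: "x = (n, m)" by fastforce
  have "real (m + 1) \<le> wpq (2 * k) 2 (n, m + 1)"
    using sum_squares_ge_zero[of "real (m + 1) - 1" 0] by (simp add: wpq_def power2_eq_square algebra_simps)
  hence "real (m + 1) * (cmod (s (n, m + 1)))\<^sup>2 \<le> wpq (2 * k) 2 (n, m + 1) * (cmod (s (n, m + 1)))\<^sup>2"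
    by (intro mult_right_mono) auto
  thus "(cmod (op_b s x))\<^sup>2 \<le> 1 * (wpq (2 * k) 2 ((\<lambda>(n, m). (n, m + 1)) x)
      * (cmod (s ((\<lambda>(n, m). (n, m + 1)) x)))\<^sup>2)"
    by (simp add: x op_b_apply norm_mult power_mult_distrib)
qed (simp_all add: wpq_nonneg)

lemma op_bdag_b_in_Hspace: "op_bdag (op_b s) \<in> Hspace"
proof (rule Hspace_reindex_dominated[OF _ _ _ s[unfolded Hpq_iff], where C=1 and A=UNIV and g=id])
  fix x :: "nat \<times> nat"
  obtain n m where x: "x = (n, m)" by fastforce
  have "(real m)\<^sup>2 \<le> wpq (2 * k) 2 (n, m)" by (simp add: wpq_def)
  hence "(real m)\<^sup>2 * (cmod (s (n, m)))\<^sup>2 \<le> wpq (2 * k) 2 (n, m) * (cmod (s (n, m)))\<^sup>2"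
    by (intro mult_right_mono) auto
  thus "(cmod (op_bdag (op_b s) x))\<^sup>2 \<le> 1 * (wpq (2 * k) 2 (id x) * (cmod (s (id x)))\<^sup>2)"
    by (simp add: x op_bdag_b_apply norm_mult power_mult_distrib)
qed (simp_all add: wpq_nonneg)

lemma op_G_in_Hspace: "op_G k \<alpha> \<kappa> s \<in> Hspace"
  unfolding op_G_expand[abs_def]
  by (intro Hspace_diff Hspace_scale Hspace_add op_ak_bdag_in_Hspace op_adagk_b_in_Hspace
            op_bdag_in_Hspace op_b_in_Hspace op_bdag_b_in_Hspace)

end

section \<open>Quasi-dissipativity for shift-invariant weights\<close>

definition dissipation_const :: "nat \<Rightarrow> real \<Rightarrow> real \<Rightarrow> real" where
  "dissipation_const k \<alpha> \<kappa> = \<bar>\<alpha>\<bar> ^ k * (1 + ladder_const k) * (2 * \<bar>\<alpha>\<bar> ^ k + 1) / (2 * \<kappa>)"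

lemma dissipation_const_nonneg: "0 < \<kappa> \<Longrightarrow> 0 \<le> dissipation_const k \<alpha> \<kappa>"
  unfolding dissipation_const_def ladder_const_def by simp

text \<open>Shift invariance makes the \<open>a\<^sup>k b\<^sup>\<dagger>\<close> and \<open>(a\<^sup>\<dagger>)\<^sup>k b\<close> terms cancel in \<open>Re \<langle>s, G s\<rangle>\<^sub>V\<close>;
  monotonicity and growth in \<open>m\<close> control the remaining \<open>b\<close> and \<open>b\<^sup>\<dagger>\<close> terms.\<close>

locale shift_weight = bounded_weight V R for V R +
  fixes k :: nat
  assumes k1: "k \<ge> 1"
    and shift: "V (n + k, m) = V (n, m + 1)"
    and mono: "V (n, m) \<le> V (n, m + 1)"
    and growth: "V (n, m + 1) \<le> ladder_const k * V (n, m)"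
begin

lemma weighted_inner_adagk_b_eq_cnj: "weighted_inner V s (op_adagk_b k s) = cnj (weighted_inner V s (op_ak_bdag k s))"
proof -
  define E where "E x = complex_of_real (V x) * cnj (s x) * op_ak_bdag k s x" for x
  define F where "F y = complex_of_real (V y) * cnj (s y) * op_adagk_b k s y" for y
  define h where "h = (\<lambda>(n::nat, m::nat). (n - k, m + 1))"
  define A where "A = {x::nat \<times> nat. 1 \<le> snd x}"
  define B where "B = {x::nat \<times> nat. k \<le> fst x}"
  have inj: "inj_on h B" unfolding h_def B_def inj_on_def split_paired_all by simp arith
  have hB: "h ` B = A"
  proof
    show "h ` B \<subseteq> A" by (auto simp: h_def A_def B_def)
    show "A \<subseteq> h ` B"
    proof
      fix x assume "x \<in> A"
      then obtain n m where x: "x = (n, m)" "1 \<le> m" by (cases x) (auto simp: A_def)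
      hence "h (n + k, m - 1) = x" by (simp add: h_def)
      moreover have "(n + k, m - 1) \<in> B" by (simp add: B_def)
      ultimately show "x \<in> h ` B" by (metis image_eqI)
    qed
  qed
  have "infsum F UNIV = infsum F B"
  proof (rule infsum_cong_neutral)
    fix x assume "x \<in> UNIV - B"
    then obtain n m where "x = (n, m)" "n < k" by (cases x) (auto simp: B_def)
    thus "F x = 0" by (simp add: F_def op_adagk_b_apply)
  qed auto
  also have "\<dots> = infsum (\<lambda>y. cnj (E (h y))) B"
  proof (rule infsum_cong)
    fix y assume "y \<in> B"
    then obtain n m where y: "y = (n, m)" and n: "k \<le> n" by (cases y) (auto simp: B_def)
    have "V (n - k, Suc m) = V (n, m)" using shift[of "n - k" m] n by simp
    thus "F y = cnj (E (h y))"
      using n by (simp add: y E_def F_def h_def op_adagk_b_apply op_ak_bdag_apply)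
  qed
  also have "\<dots> = cnj (infsum E (h ` B))"
    using infsum_reindex[OF inj, of E] by (simp add: o_def)
  also have "infsum E (h ` B) = infsum E UNIV"
    unfolding hB
  proof (rule infsum_cong_neutral)
    fix x assume "x \<in> UNIV - A"
    then obtain n m where "x = (n, m)" "m = 0" by (cases x) (auto simp: A_def)
    thus "E x = 0" by (simp add: E_def op_ak_bdag_apply)
  qed auto
  finally show ?thesis by (simp add: weighted_inner_def E_def[abs_def] F_def[abs_def])
qed

definition dens :: "fock \<Rightarrow> nat \<times> nat \<Rightarrow> real" where
  "dens s x = V x * (cmod (s x))\<^sup>2"

definition mdens :: "fock \<Rightarrow> nat \<times> nat \<Rightarrow> real" where
  "mdens s x = real (snd x) * dens s x"

definition dens_down :: "fock \<Rightarrow> nat \<times> nat \<Rightarrow> real" where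
  "dens_down s x = (if snd x = 0 then 0 else dens s (fst x, snd x - 1))"

definition mdens_up :: "fock \<Rightarrow> nat \<times> nat \<Rightarrow> real" where
  "mdens_up s x = mdens s (fst x, snd x + 1)"

lemma dens_nonneg: "0 \<le> dens s x"
  using nonneg[of x] by (simp add: dens_def)

lemma mdens_nonneg: "0 \<le> mdens s x"
  using dens_nonneg by (simp add: mdens_def)

lemma Re_bdag_term_le:
  assumes d: "0 < d"
  shows "Re (complex_of_real (V x) * cnj (s x) * \<i> * complex_of_real a * op_bdag s x)
     \<le> \<bar>a\<bar> * (d / 2 * mdens s x + ladder_const k / (2 * d) * dens_down s x)"
proof -
  obtain n m where x: "x = (n, m)" by fastforce
  define w where "w = complex_of_real (V x) * cnj (s x) * \<i> * complex_of_real a * op_bdag s x"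
  show ?thesis
  proof (cases "m = 0")
    case True
    thus ?thesis using d by (simp add: x op_bdag_apply mdens_def dens_down_def)
  next
    case False
    have v0: "0 \<le> V (n, m)" by (rule nonneg)
    have "Re w \<le> cmod w" by (rule complex_Re_le_cmod)
    also have "cmod w = \<bar>a\<bar> * (V (n, m) * ((sqrt (real m) * cmod (s (n, m))) * cmod (s (n, m - 1))))"
      using False v0 by (simp add: w_def x op_bdag_apply norm_mult)
    also have "\<dots> \<le> \<bar>a\<bar> * (V (n, m) * ((d * (sqrt (real m) * cmod (s (n, m)))\<^sup>2 + (cmod (s (n, m - 1)))\<^sup>2 / d) / 2))"
      by (intro mult_left_mono mult_le_scaled_squares d v0) auto
    also have "\<dots> = \<bar>a\<bar> * (d / 2 * mdens s x + V (n, m) * (cmod (s (n, m - 1)))\<^sup>2 / (2 * d))"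
      by (simp add: mdens_def dens_def x power_mult_distrib field_simps)
    also have "\<dots> \<le> \<bar>a\<bar> * (d / 2 * mdens s x + ladder_const k / (2 * d) * dens_down s x)"
    proof -
      have "V (n, m) * (cmod (s (n, m - 1)))\<^sup>2 / (2 * d)
          \<le> ladder_const k * V (n, m - 1) * (cmod (s (n, m - 1)))\<^sup>2 / (2 * d)"
        using growth[of n "m - 1"] False d by (intro divide_right_mono mult_right_mono) auto
      also have "\<dots> = ladder_const k / (2 * d) * dens_down s x"
        using False by (simp add: dens_down_def dens_def x)
      finally show ?thesis by (intro mult_left_mono add_left_mono) auto
    qed
    finally show ?thesis by (simp add: w_def)
  qed
qed

lemma Re_b_term_le:
  assumes d: "0 < d"
  shows "Re (complex_of_real (V x) * cnj (s x) * \<i> * complex_of_real a * op_b s x)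
     \<le> \<bar>a\<bar> * (1 / (2 * d) * dens s x + d / 2 * mdens_up s x)"
proof -
  obtain n m where x: "x = (n, m)" by fastforce
  define w where "w = complex_of_real (V x) * cnj (s x) * \<i> * complex_of_real a * op_b s x"
  have v0: "0 \<le> V (n, m)" by (rule nonneg)
  have "Re w \<le> cmod w" by (rule complex_Re_le_cmod)
  also have "cmod w = \<bar>a\<bar> * (V (n, m) * ((sqrt (real (m + 1)) * cmod (s (n, m + 1))) * cmod (s (n, m))))"
    using v0 by (simp add: w_def x op_b_apply norm_mult)
  also have "\<dots> \<le> \<bar>a\<bar> * (V (n, m) * ((d * (sqrt (real (m + 1)) * cmod (s (n, m + 1)))\<^sup>2 + (cmod (s (n, m)))\<^sup>2 / d) / 2))"
    by (intro mult_left_mono mult_le_scaled_squares d v0) auto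
  also have "\<dots> = \<bar>a\<bar> * (1 / (2 * d) * dens s x + d / 2 * (real (m + 1) * V (n, m) * (cmod (s (n, m + 1)))\<^sup>2))"
    by (simp add: dens_def x power_mult_distrib field_simps)
  also have "\<dots> \<le> \<bar>a\<bar> * (1 / (2 * d) * dens s x + d / 2 * mdens_up s x)"
  proof -
    have "real (m + 1) * V (n, m) * (cmod (s (n, m + 1)))\<^sup>2 \<le> real (m + 1) * V (n, m + 1) * (cmod (s (n, m + 1)))\<^sup>2"
      using mono[of n m] by (intro mult_right_mono mult_left_mono) auto
    also have "\<dots> = mdens_up s x" by (simp add: mdens_up_def mdens_def dens_def x)
    finally show ?thesis using d by (intro mult_left_mono add_left_mono) auto
  qed
  finally show ?thesis by (simp add: w_def)
qed

text \<open>What remains of \<open>\<langle>s, G s\<rangle>\<^sub>V\<close> after the cancellation of the \<open>a\<^sup>k b\<^sup>\<dagger>\<close> and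
  \<open>(a\<^sup>\<dagger>)\<^sup>k b\<close> terms, bounded pointwise with a free AM-GM parameter \<open>d\<close>.\<close>

lemma Re_weighted_inner_remainder_le:
  assumes d: "0 < d"
  shows "Re (complex_of_real (V x) * cnj (s x) *
            (\<i> * complex_of_real a * (op_bdag s x + op_b s x) - complex_of_real (\<kappa> / 2) * op_bdag (op_b s) x))
     \<le> (\<bar>a\<bar> * d / 2 - \<kappa> / 2) * mdens s x + \<bar>a\<bar> / (2 * d) * dens s x
        + \<bar>a\<bar> * ladder_const k / (2 * d) * dens_down s x + \<bar>a\<bar> * d / 2 * mdens_up s x"
proof -
  obtain n m where x: "x = (n, m)" by fastforce
  define w1 where "w1 = complex_of_real (V x) * cnj (s x) * \<i> * complex_of_real a * op_bdag s x"
  define w2 where "w2 = complex_of_real (V x) * cnj (s x) * \<i> * complex_of_real a * op_b s x"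
  have "complex_of_real (V x) * cnj (s x) *
          (\<i> * complex_of_real a * (op_bdag s x + op_b s x) - complex_of_real (\<kappa> / 2) * op_bdag (op_b s) x)
      = w1 + w2 - complex_of_real (\<kappa> / 2 * real m * V x) * (cnj (s x) * s x)"
    by (simp add: w1_def w2_def x op_bdag_b_apply algebra_simps)
  moreover have "cnj (s x) * s x = complex_of_real ((cmod (s x))\<^sup>2)"
    using complex_norm_square[of "s x"] by (simp only: mult.commute)
  ultimately have "Re (complex_of_real (V x) * cnj (s x) *
          (\<i> * complex_of_real a * (op_bdag s x + op_b s x) - complex_of_real (\<kappa> / 2) * op_bdag (op_b s) x))
      = Re w1 + Re w2 - \<kappa> / 2 * mdens s x"
    by (simp add: mdens_def dens_def x)
  thus ?thesis
    using Re_bdag_term_le[OF d, of x s a] Re_b_term_le[OF d, of x s a]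
    unfolding w1_def w2_def by (simp add: algebra_simps)
qed

lemma dens_summable: "s \<in> Hspace \<Longrightarrow> dens s summable_on UNIV"
  using wsum_summable by (simp add: dens_def[abs_def])

lemma mdens_summable:
  assumes s: "s \<in> Hpq (2 * k) 2"
  shows "mdens s summable_on UNIV"
proof (rule summable_on_comparison_test[OF summable_on_cmult_right[OF s[unfolded Hpq_iff], of R]])
  fix x :: "nat \<times> nat"
  obtain n m where x: "x = (n, m)" by fastforce
  have "real m \<le> wpq (2 * k) 2 (n, m)"
  proof -
    have "real m \<le> (real m)\<^sup>2 + 1"
      using sum_squares_ge_zero[of "real m - 1/2" 0] by (simp add: power2_eq_square algebra_simps)
    moreover have "wpq (2 * k) 2 (n, m) = 1 + real n ^ (2 * k) + (real m)\<^sup>2" by (simp add: wpq_def)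
    moreover have "0 \<le> real n ^ (2 * k)" by simp
    ultimately show ?thesis by linarith
  qed
  hence "real m * V x \<le> wpq (2 * k) 2 (n, m) * R"
    using nonneg[of x] bounded[of x] by (intro mult_mono) auto
  hence "(real m * V x) * (cmod (s x))\<^sup>2 \<le> (wpq (2 * k) 2 (n, m) * R) * (cmod (s x))\<^sup>2"
    by (rule mult_right_mono) simp
  thus "mdens s x \<le> R * (wpq (2 * k) 2 x * (cmod (s x))\<^sup>2)"
    by (simp add: mdens_def dens_def x algebra_simps)
  show "0 \<le> mdens s x" by (rule mdens_nonneg)
qed

lemma dens_down_summable_le:
  assumes "s \<in> Hspace"
  shows "dens_down s summable_on UNIV" "infsum (dens_down s) UNIV \<le> infsum (dens s) UNIV"
proof -
  have "inj_on (\<lambda>(n::nat, m::nat). (n, m - 1)) {x. 1 \<le> snd x}"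
    unfolding inj_on_def split_paired_all by simp arith
  note r = infsum_reindex_le[OF this, where f="dens_down s" and h="dens s" and C=1,
             OF _ _ _ dens_summable[OF assms] dens_nonneg]
  show "dens_down s summable_on UNIV" "infsum (dens_down s) UNIV \<le> infsum (dens s) UNIV"
    using r by (auto simp: dens_down_def dens_nonneg split: prod.splits)
qed

lemma mdens_up_summable_le:
  assumes "s \<in> Hpq (2 * k) 2"
  shows "mdens_up s summable_on UNIV" "infsum (mdens_up s) UNIV \<le> infsum (mdens s) UNIV"
proof -
  have "inj_on (\<lambda>(n::nat, m::nat). (n, m + 1)) UNIV"
    unfolding inj_on_def split_paired_all by simp
  note r = infsum_reindex_le[OF this, where f="mdens_up s" and h="mdens s" and C=1,
             OF _ _ _ mdens_summable[OF assms] mdens_nonneg]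
  show "mdens_up s summable_on UNIV" "infsum (mdens_up s) UNIV \<le> infsum (mdens s) UNIV"
    using r by (auto simp: mdens_up_def mdens_nonneg split: prod.splits)
qed

lemma infsum_remainder_bound_le:
  assumes s: "s \<in> Hpq (2 * k) 2" and d0: "0 < d" and A0: "0 \<le> A" and Ad: "A * d \<le> \<kappa> / 2"
  shows "(\<Sum>\<^sub>\<infinity>x. (A * d / 2 - \<kappa> / 2) * mdens s x + A / (2 * d) * dens s x
            + A * ladder_const k / (2 * d) * dens_down s x + A * d / 2 * mdens_up s x)
         \<le> (A / (2 * d) + A * ladder_const k / (2 * d)) * wsum V s"
proof -
  have sH: "s \<in> Hspace" by (rule Hpq_subset_Hspace[OF s])
  note sums = dens_summable[OF sH] mdens_summable[OF s] dens_down_summable_le(1)[OF sH] mdens_up_summable_le(1)[OF s]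
  have "(\<Sum>\<^sub>\<infinity>x. (A * d / 2 - \<kappa> / 2) * mdens s x + A / (2 * d) * dens s x
            + A * ladder_const k / (2 * d) * dens_down s x + A * d / 2 * mdens_up s x)
      = (A * d / 2 - \<kappa> / 2) * infsum (mdens s) UNIV + A / (2 * d) * infsum (dens s) UNIV
        + A * ladder_const k / (2 * d) * infsum (dens_down s) UNIV + A * d / 2 * infsum (mdens_up s) UNIV"
    by (subst infsum_add, intro summable_on_add summable_on_cmult_right sums, intro summable_on_cmult_right sums,
        subst infsum_add, intro summable_on_add summable_on_cmult_right sums, intro summable_on_cmult_right sums,
        subst infsum_add, intro summable_on_cmult_right sums, intro summable_on_cmult_right sums,
        simp only: infsum_cmult_right')
  also have "\<dots> \<le> (A * d / 2 - \<kappa> / 2) * infsum (mdens s) UNIV + A / (2 * d) * infsum (dens s) UNIV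
        + A * ladder_const k / (2 * d) * infsum (dens s) UNIV + A * d / 2 * infsum (mdens s) UNIV"
  proof -
    have "0 \<le> A * ladder_const k / (2 * d)" "0 \<le> A * d / 2"
      using A0 d0 ladder_const_ge[OF k1] by simp_all
    thus ?thesis
      using mult_left_mono[OF dens_down_summable_le(2)[OF sH]] mult_left_mono[OF mdens_up_summable_le(2)[OF s]]
      by (smt (verit))
  qed
  also have "\<dots> \<le> (A / (2 * d) + A * ladder_const k / (2 * d)) * infsum (dens s) UNIV"
  proof -
    have "0 \<le> infsum (mdens s) UNIV" by (rule infsum_nonneg) (rule mdens_nonneg)
    hence "((A * d / 2 - \<kappa> / 2) + A * d / 2) * infsum (mdens s) UNIV \<le> 0"
      using Ad by (intro mult_nonpos_nonneg) auto
    thus ?thesis by (simp add: algebra_simps)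
  qed
  finally show ?thesis by (simp add: wsum_def dens_def[abs_def])
qed

text \<open>The AM-GM parameter is chosen as \<open>d = \<kappa> / (2 |\<alpha>|^k + 1)\<close>, so that \<open>|\<alpha>|^k d \<le> \<kappa> / 2\<close>.\<close>

lemma Re_weighted_inner_op_G_le:
  assumes s: "s \<in> Hpq (2 * k) 2" and kap: "\<kappa> > 0"
  shows "Re (weighted_inner V s (op_G k \<alpha> \<kappa> s)) \<le> dissipation_const k \<alpha> \<kappa> * wsum V s"
proof -
  define a where "a = \<alpha> ^ k"
  define A where "A = \<bar>a\<bar>"
  define d where "d = \<kappa> / (2 * A + 1)"
  have A0: "0 \<le> A" by (simp add: A_def)
  hence d0: "0 < d" using kap by (simp add: d_def)
  have Ad: "A * d \<le> \<kappa> / 2"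
    using A0 kap by (simp add: d_def field_simps)
  have sH: "s \<in> Hspace" by (rule Hpq_subset_Hspace[OF s])
  define Rest where "Rest x = \<i> * complex_of_real a * (op_bdag s x + op_b s x)
                              - complex_of_real (\<kappa> / 2) * op_bdag (op_b s) x" for x
  have RH: "Rest \<in> Hspace"
    unfolding Rest_def[abs_def]
    by (intro Hspace_diff Hspace_scale Hspace_add op_bdag_in_Hspace[OF k1 s] op_b_in_Hspace[OF k1 s]
        op_bdag_b_in_Hspace[OF k1 s])
  have "op_G k \<alpha> \<kappa> s = (\<lambda>x. (- \<i>) * op_ak_bdag k s x + (- \<i>) * op_adagk_b k s x + Rest x)"
    by (rule ext) (simp add: op_G_expand Rest_def a_def algebra_simps)
  hence "weighted_inner V s (op_G k \<alpha> \<kappa> s) = (- \<i>) * weighted_inner V s (op_ak_bdag k s)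
      + (- \<i>) * weighted_inner V s (op_adagk_b k s) + weighted_inner V s Rest"
    using weighted_inner_add3[OF sH op_ak_bdag_in_Hspace[OF k1 s] op_adagk_b_in_Hspace[OF k1 s] RH]
    by (simp only:)
  hence "Re (weighted_inner V s (op_G k \<alpha> \<kappa> s)) = Re (weighted_inner V s Rest)"
    by (simp add: weighted_inner_adagk_b_eq_cnj)
  also have "\<dots> = (\<Sum>\<^sub>\<infinity>x. Re (complex_of_real (V x) * cnj (s x) * Rest x))"
    unfolding weighted_inner_def by (rule infsum_Re[symmetric]) (rule weighted_inner_summable[OF sH RH])
  also have "\<dots> \<le> (\<Sum>\<^sub>\<infinity>x. (A * d / 2 - \<kappa> / 2) * mdens s x + A / (2 * d) * dens s x
                   + A * ladder_const k / (2 * d) * dens_down s x + A * d / 2 * mdens_up s x)"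
    unfolding Rest_def A_def
    by (intro infsum_mono summable_on_Re weighted_inner_summable[OF sH RH[unfolded Rest_def[abs_def]]]
        summable_on_add summable_on_cmult_right dens_summable mdens_summable dens_down_summable_le(1)
        mdens_up_summable_le(1) Re_weighted_inner_remainder_le d0 sH s)
  also have "\<dots> \<le> (A / (2 * d) + A * ladder_const k / (2 * d)) * wsum V s"
    by (rule infsum_remainder_bound_le[OF s d0 A0 Ad])
  also have "\<dots> = dissipation_const k \<alpha> \<kappa> * wsum V s"
    using d0 kap by (simp add: dissipation_const_def A_def a_def d_def power_abs field_simps)
  finally show ?thesis .
qed

end

section \<open>The weight \<open>(1 + n + k m)^{2k}\<close>\<close>

text \<open>This weight is invariant under the shift \<open>(n + k, m) \<leftrightarrow> (n, m + 1)\<close>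
  and equivalent to the weight of \<open>H^{2k,2k}\<close>. Its truncations at height \<open>R\<close> are bounded
  shift weights, so the energy estimate applies to them uniformly in \<open>R\<close>.\<close>

definition poly_weight :: "nat \<Rightarrow> nat \<times> nat \<Rightarrow> real" where
  "poly_weight k x = (1 + real (fst x) + real k * real (snd x)) ^ (2 * k)"

definition trunc_weight :: "nat \<Rightarrow> real \<Rightarrow> nat \<times> nat \<Rightarrow> real" where
  "trunc_weight k R x = min (poly_weight k x) R"

lemma poly_weight_nonneg: "0 \<le> poly_weight k x"
  by (simp add: poly_weight_def)

lemma trunc_weight_shift_weight:
  assumes k: "k \<ge> 1" and R: "0 \<le> R"
  shows "shift_weight (trunc_weight k R) R k"
proof
  fix x n m
  show "0 \<le> trunc_weight k R x" using R poly_weight_nonneg[of k x] by (simp add: trunc_weight_def)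
  show "trunc_weight k R x \<le> R" by (simp add: trunc_weight_def)
  show "k \<ge> 1" by (rule k)
  show "trunc_weight k R (n + k, m) = trunc_weight k R (n, m + 1)"
    by (simp add: trunc_weight_def poly_weight_def algebra_simps)
  have "poly_weight k (n, m) \<le> poly_weight k (n, m + 1)"
    unfolding poly_weight_def by (intro power_mono) (auto simp: algebra_simps)
  thus "trunc_weight k R (n, m) \<le> trunc_weight k R (n, m + 1)"
    by (simp add: trunc_weight_def min_le_iff_disj)
  define b where "b = 1 + real n + real k * real m"
  have b1: "1 \<le> b" by (simp add: b_def)
  have "b + real k \<le> (1 + real k) * b"
    using mult_right_mono[of 1 b "real k"] b1 by (simp add: algebra_simps)
  hence "(b + real k) ^ (2 * k) \<le> ((1 + real k) * b) ^ (2 * k)"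
    using b1 by (intro power_mono) auto
  moreover have "poly_weight k (n, m + 1) = (b + real k) ^ (2 * k)"
    by (simp add: poly_weight_def b_def algebra_simps)
  moreover have "poly_weight k (n, m) = b ^ (2 * k)" by (simp add: poly_weight_def b_def)
  ultimately have W: "poly_weight k (n, m + 1) \<le> ladder_const k * poly_weight k (n, m)"
    by (simp add: ladder_const_def power_mult_distrib)
  have "R \<le> ladder_const k * R"
    using ladder_const_ge[OF k] R by (simp add: mult_le_cancel_right1)
  thus "trunc_weight k R (n, m + 1) \<le> ladder_const k * trunc_weight k R (n, m)"
    using W ladder_const_ge[OF k] unfolding trunc_weight_def
    by (cases "poly_weight k (n, m) \<le> R") (auto simp: min_def)
qed

lemma wpq_le_poly_weight:
  assumes k: "k \<ge> 1"
  shows "wpq (2 * k) (2 * k) x \<le> 3 * poly_weight k x"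
proof -
  obtain n m where x: "x = (n, m)" by fastforce
  define b where "b = 1 + real n + real k * real m"
  have "1 \<le> b ^ (2 * k)" by (simp add: b_def one_le_power)
  moreover have "real n ^ (2 * k) \<le> b ^ (2 * k)" by (intro power_mono) (auto simp: b_def)
  moreover have "real m ^ (2 * k) \<le> b ^ (2 * k)"
  proof (intro power_mono)
    have "real m * 1 \<le> real m * real k" using k by (intro mult_left_mono) auto
    thus "real m \<le> b" by (simp add: b_def algebra_simps)
  qed simp
  moreover have "poly_weight k x = b ^ (2 * k)" by (simp add: x poly_weight_def b_def)
  moreover have "wpq (2 * k) (2 * k) x = 1 + real n ^ (2 * k) + real m ^ (2 * k)" by (simp add: x wpq_def)
  ultimately show ?thesis by linarith
qed

definition poly_weight_const :: "nat \<Rightarrow> real" where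
  "poly_weight_const k = (3 * real k) ^ (2 * k)"

lemma poly_weight_le_wpq:
  assumes k: "k \<ge> 1"
  shows "poly_weight k x \<le> poly_weight_const k * wpq (2 * k) (2 * k) x"
proof -
  obtain n m where x: "x = (n, m)" by fastforce
  define M where "M = max 1 (max (real n) (real k * real m))"
  have "1 + real n + real k * real m \<le> 3 * M" by (simp add: M_def)
  hence "poly_weight k x \<le> (3 * M) ^ (2 * k)" unfolding poly_weight_def x by (intro power_mono) auto
  also have "\<dots> = 3 ^ (2 * k) * M ^ (2 * k)" by (simp add: power_mult_distrib)
  also have "M ^ (2 * k) \<le> 1 + real n ^ (2 * k) + (real k * real m) ^ (2 * k)"
    unfolding M_def by (auto simp: max_def)
  also have "\<dots> \<le> real k ^ (2 * k) * (1 + real n ^ (2 * k) + real m ^ (2 * k))"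
  proof -
    have "1 * (1 + real n ^ (2 * k)) \<le> real k ^ (2 * k) * (1 + real n ^ (2 * k))"
      using k by (intro mult_right_mono one_le_power) auto
    thus ?thesis by (simp add: power_mult_distrib algebra_simps)
  qed
  finally show ?thesis by (simp add: poly_weight_const_def wpq_def x power_mult_distrib mult.assoc)
qed

lemma poly_weight_summable:
  assumes k: "k \<ge> 1" and s: "s \<in> Hpq (2 * k) (2 * k)"
  shows "(\<lambda>x. poly_weight k x * (cmod (s x))\<^sup>2) summable_on UNIV"
proof (rule summable_on_comparison_test[OF summable_on_cmult_right[OF s[unfolded Hpq_iff], of "poly_weight_const k"]])
  fix x
  show "poly_weight k x * (cmod (s x))\<^sup>2 \<le> poly_weight_const k * (wpq (2 * k) (2 * k) x * (cmod (s x))\<^sup>2)"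
    using mult_right_mono[OF poly_weight_le_wpq[OF k, of x], of "(cmod (s x))\<^sup>2"] by (simp add: mult.assoc)
  show "0 \<le> poly_weight k x * (cmod (s x))\<^sup>2" using poly_weight_nonneg[of k x] by simp
qed

lemma Hpq_if_poly_weight_summable:
  assumes k: "k \<ge> 1" and s: "(\<lambda>x. poly_weight k x * (cmod (s x))\<^sup>2) summable_on UNIV"
  shows "s \<in> Hpq (2 * k) (2 * k)"
  unfolding Hpq_iff
proof (rule summable_on_comparison_test[OF summable_on_cmult_right[OF s, of 3]])
  fix x
  show "wpq (2 * k) (2 * k) x * (cmod (s x))\<^sup>2 \<le> 3 * (poly_weight k x * (cmod (s x))\<^sup>2)"
    using mult_right_mono[OF wpq_le_poly_weight[OF k, of x], of "(cmod (s x))\<^sup>2"] by (simp add: mult.assoc)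
  show "0 \<le> wpq (2 * k) (2 * k) x * (cmod (s x))\<^sup>2" by (simp add: wpq_nonneg)
qed

lemma wsum_wpq_le_poly_weight:
  assumes k: "k \<ge> 1" and s: "s \<in> Hpq (2 * k) (2 * k)"
  shows "wsum (wpq (2 * k) (2 * k)) s \<le> 3 * wsum (poly_weight k) s"
proof -
  have "wsum (wpq (2 * k) (2 * k)) s \<le> (\<Sum>\<^sub>\<infinity>x. 3 * (poly_weight k x * (cmod (s x))\<^sup>2))"
    unfolding wsum_def
  proof (rule infsum_mono)
    show "(\<lambda>x. wpq (2 * k) (2 * k) x * (cmod (s x))\<^sup>2) summable_on UNIV" using s by (simp add: Hpq_iff)
    show "(\<lambda>x. 3 * (poly_weight k x * (cmod (s x))\<^sup>2)) summable_on UNIV"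
      by (intro summable_on_cmult_right poly_weight_summable[OF k s])
    fix x show "wpq (2 * k) (2 * k) x * (cmod (s x))\<^sup>2 \<le> 3 * (poly_weight k x * (cmod (s x))\<^sup>2)"
      using mult_right_mono[OF wpq_le_poly_weight[OF k, of x], of "(cmod (s x))\<^sup>2"] by (simp add: mult.assoc)
  qed
  thus ?thesis by (simp add: infsum_cmult_right' wsum_def)
qed

lemma wsum_poly_weight_le_wpq:
  assumes k: "k \<ge> 1" and s: "s \<in> Hpq (2 * k) (2 * k)"
  shows "wsum (poly_weight k) s \<le> poly_weight_const k * wsum (wpq (2 * k) (2 * k)) s"
proof -
  have "wsum (poly_weight k) s \<le> (\<Sum>\<^sub>\<infinity>x. poly_weight_const k * (wpq (2 * k) (2 * k) x * (cmod (s x))\<^sup>2))"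
    unfolding wsum_def
  proof (rule infsum_mono)
    show "(\<lambda>x. poly_weight_const k * (wpq (2 * k) (2 * k) x * (cmod (s x))\<^sup>2)) summable_on UNIV"
      using s by (intro summable_on_cmult_right) (simp add: Hpq_iff)
    show "(\<lambda>x. poly_weight k x * (cmod (s x))\<^sup>2) summable_on UNIV" by (rule poly_weight_summable[OF k s])
    fix x show "poly_weight k x * (cmod (s x))\<^sup>2 \<le> poly_weight_const k * (wpq (2 * k) (2 * k) x * (cmod (s x))\<^sup>2)"
      using mult_right_mono[OF poly_weight_le_wpq[OF k, of x], of "(cmod (s x))\<^sup>2"] by (simp add: mult.assoc)
  qed
  thus ?thesis by (simp add: infsum_cmult_right' wsum_def)
qed

lemma wsum_weight_diff:
  assumes "(\<lambda>x. P x * (cmod (s x))\<^sup>2) summable_on UNIV" "(\<lambda>x. Q x * (cmod (s x))\<^sup>2) summable_on UNIV"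
  shows "wsum (\<lambda>x. P x - Q x) s = wsum P s - wsum Q s"
  unfolding wsum_def left_diff_distrib by (rule infsum_diff[OF assms])

lemma trunc_weight_summable:
  assumes "0 \<le> R" "s \<in> Hspace"
  shows "(\<lambda>x. trunc_weight k R x * (cmod (s x))\<^sup>2) summable_on UNIV"
  using assms poly_weight_nonneg
  by (intro bounded_weight.wsum_summable[of _ R]) (unfold_locales, auto simp: trunc_weight_def)

lemma truncation_error_small:
  assumes g: "(\<lambda>x. poly_weight k x * (cmod (s x))\<^sup>2) summable_on UNIV" and e: "0 < e"
  obtains R where "0 \<le> R" "wsum (\<lambda>x. poly_weight k x - trunc_weight k R x) s < e"
proof -
  define f where "f x = poly_weight k x * (cmod (s x))\<^sup>2" for x
  have f0: "0 \<le> f x" for x using poly_weight_nonneg[of k x] by (simp add: f_def)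
  have fs: "f summable_on UNIV" using g by (simp add: f_def[abs_def])
  obtain F where F: "finite F" and dF: "dist (sum f F) (infsum f UNIV) \<le> e / 2"
    using infsum_finite_approximation[OF fs, of "e/2"] e by auto
  define R where "R = (\<Sum>x\<in>F. poly_weight k x)"
  have R0: "0 \<le> R" unfolding R_def by (rule sum_nonneg) (simp add: poly_weight_nonneg)
  have RF: "poly_weight k x \<le> R" if "x \<in> F" for x
    unfolding R_def by (rule member_le_sum) (auto simp: poly_weight_nonneg F that)
  define g' where "g' x = (if x \<in> F then 0 else f x)" for x
  have tb: "(poly_weight k x - trunc_weight k R x) * (cmod (s x))\<^sup>2 \<le> g' x" for x
  proof (cases "x \<in> F")
    case True thus ?thesis using RF[OF True] by (simp add: g'_def trunc_weight_def)
  next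
    case False
    have "(poly_weight k x - trunc_weight k R x) * (cmod (s x))\<^sup>2 \<le> poly_weight k x * (cmod (s x))\<^sup>2"
      using R0 poly_weight_nonneg[of k x] by (intro mult_right_mono) (auto simp: trunc_weight_def)
    thus ?thesis using False by (simp add: g'_def f_def)
  qed
  have g's: "g' summable_on UNIV"
    by (rule summable_on_comparison_test[OF fs]) (auto simp: g'_def f0)
  have "infsum f UNIV = infsum (\<lambda>x. (if x \<in> F then f x else 0) + g' x) UNIV"
    by (rule infsum_cong) (simp add: g'_def)
  also have "\<dots> = sum f F + infsum g' UNIV"
    using infsum_add[OF summable_on_comparison_test[OF fs, of "\<lambda>x. if x \<in> F then f x else 0"] g's]
      infsum_cong_neutral[of UNIV F "\<lambda>x. if x \<in> F then f x else 0" f] F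
    by (auto simp: f0)
  finally have "infsum g' UNIV \<le> e / 2"
    using dF by (simp add: dist_real_def)
  moreover have "wsum (\<lambda>x. poly_weight k x - trunc_weight k R x) s \<le> infsum g' UNIV"
  proof -
    have "(\<lambda>x. (poly_weight k x - trunc_weight k R x) * (cmod (s x))\<^sup>2) summable_on UNIV"
      by (rule summable_on_comparison_test[OF g's tb]) (simp add: trunc_weight_def)
    thus ?thesis unfolding wsum_def by (rule infsum_mono[OF _ g's tb])
  qed
  ultimately show ?thesis using that R0 e by fastforce
qed

lemma wsum_poly_weight_diff_le:
  assumes k: "k \<ge> 1" and R0: "0 \<le> R" and u: "u \<in> Hpq (2 * k) (2 * k)" and \<psi>: "\<psi> \<in> Hpq (2 * k) (2 * k)"
  shows "wsum (poly_weight k) (\<lambda>x. u x - \<psi> x)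
      \<le> R * (Hnorm (\<lambda>x. u x - \<psi> x))\<^sup>2 + 2 * (wsum (poly_weight k) u - wsum (trunc_weight k R) u)
         + 2 * (wsum (poly_weight k) \<psi> - wsum (trunc_weight k R) \<psi>)"
proof -
  define P where "P = poly_weight k"
  define Q where "Q = trunc_weight k R"
  define D where "D x = P x - Q x" for x
  have D0: "0 \<le> D x" for x by (simp add: D_def P_def Q_def trunc_weight_def)
  have uH: "u \<in> Hspace" and pH: "\<psi> \<in> Hspace" and dH: "(\<lambda>x. u x - \<psi> x) \<in> Hspace"
    using Hpq_subset_Hspace u \<psi> Hspace_diff by blast+
  have Ps: "(\<lambda>x. P x * (cmod (a x))\<^sup>2) summable_on UNIV" if "a \<in> Hpq (2 * k) (2 * k)" for a
    using poly_weight_summable[OF k that] by (simp add: P_def)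
  have Qs: "(\<lambda>x. Q x * (cmod (a x))\<^sup>2) summable_on UNIV" if "a \<in> Hspace" for a
    using trunc_weight_summable[OF R0 that] by (simp add: Q_def)
  have Ds: "(\<lambda>x. D x * (cmod (a x))\<^sup>2) summable_on UNIV" if "a \<in> Hpq (2 * k) (2 * k)" for a
    using summable_on_diff[OF Ps[OF that] Qs[OF Hpq_subset_Hspace[OF that]]] by (simp add: D_def left_diff_distrib)
  have "wsum P (\<lambda>x. u x - \<psi> x) \<le> (\<Sum>\<^sub>\<infinity>x. Q x * (cmod (u x - \<psi> x))\<^sup>2
           + 2 * (D x * (cmod (u x))\<^sup>2) + 2 * (D x * (cmod (\<psi> x))\<^sup>2))"
    unfolding wsum_def
  proof (rule infsum_mono)
    show "(\<lambda>x. P x * (cmod (u x - \<psi> x))\<^sup>2) summable_on UNIV" by (rule Ps[OF Hpq_diff[OF u \<psi>]])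
    show "(\<lambda>x. Q x * (cmod (u x - \<psi> x))\<^sup>2 + 2 * (D x * (cmod (u x))\<^sup>2) + 2 * (D x * (cmod (\<psi> x))\<^sup>2))
        summable_on UNIV"
      by (intro summable_on_add summable_on_cmult_right Qs dH Ds u \<psi>)
    fix x
    have "D x * (cmod (u x - \<psi> x))\<^sup>2 \<le> D x * (2 * (cmod (u x))\<^sup>2 + 2 * (cmod (\<psi> x))\<^sup>2)"
      by (rule mult_left_mono[OF cmod_diff_sq_le D0])
    thus "P x * (cmod (u x - \<psi> x))\<^sup>2
        \<le> Q x * (cmod (u x - \<psi> x))\<^sup>2 + 2 * (D x * (cmod (u x))\<^sup>2) + 2 * (D x * (cmod (\<psi> x))\<^sup>2)"
      by (simp add: D_def algebra_simps)
  qed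
  also have "\<dots> = wsum Q (\<lambda>x. u x - \<psi> x) + 2 * wsum D u + 2 * wsum D \<psi>"
    unfolding wsum_def
    by (subst infsum_add, intro summable_on_add summable_on_cmult_right Qs dH Ds u,
        intro summable_on_cmult_right Ds \<psi>, subst infsum_add, rule Qs[OF dH],
        intro summable_on_cmult_right Ds u, simp only: infsum_cmult_right')
  also have "wsum Q (\<lambda>x. u x - \<psi> x) \<le> R * (Hnorm (\<lambda>x. u x - \<psi> x))\<^sup>2"
    using R0 poly_weight_nonneg unfolding Q_def
    by (intro bounded_weight.wsum_le dH) (unfold_locales, auto simp: trunc_weight_def)
  also have "wsum D u = wsum P u - wsum Q u"
    unfolding D_def by (rule wsum_weight_diff[OF Ps[OF u] Qs[OF uH]])
  also have "wsum D \<psi> = wsum P \<psi> - wsum Q \<psi>"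
    unfolding D_def by (rule wsum_weight_diff[OF Ps[OF \<psi>] Qs[OF pH]])
  finally show ?thesis by (simp add: P_def Q_def)
qed

section \<open>A Gronwall lemma for Dini derivatives\<close>

lemma first_exceedance:
  fixes F y :: "real \<Rightarrow> real"
  assumes Fc: "continuous_on {0..t} F" and yc: "continuous_on {0..t} y"
    and start: "F 0 \<le> y 0" and t: "0 \<le> t" and exceed: "y t < F t"
  obtains \<sigma> where "0 \<le> \<sigma>" "F \<sigma> \<le> y \<sigma>" "\<And>b. 0 < b \<Longrightarrow> \<exists>c. \<sigma> < c \<and> c < \<sigma> + b \<and> y c < F c"
proof -
  define B where "B = {r. 0 \<le> r \<and> r \<le> t \<and> y r < F r}"
  have tB: "t \<in> B" using exceed t by (simp add: B_def)
  have Bne: "B \<noteq> {}" using tB by auto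
  have Bbd: "bdd_below B" by (rule bdd_belowI[of _ 0]) (auto simp: B_def)
  define \<sigma> where "\<sigma> = Inf B"
  have s0: "0 \<le> \<sigma>" unfolding \<sigma>_def by (rule cInf_greatest[OF Bne]) (auto simp: B_def)
  have st: "\<sigma> \<le> t" unfolding \<sigma>_def by (rule cInf_lower[OF tB Bbd])
  have Fs: "F \<sigma> \<le> y \<sigma>"
  proof (cases "\<sigma> = 0")
    case True thus ?thesis using start by simp
  next
    case False
    define C where "C = {r \<in> {0..t}. F r \<le> y r}"
    have "closed C" unfolding C_def by (rule continuous_on_closed_Collect_le[OF Fc yc]) simp
    moreover have "{0..<\<sigma>} \<subseteq> C"
    proof
      fix r assume r: "r \<in> {0..<\<sigma>}"
      have "r \<notin> B"
        using r cInf_lower[OF _ Bbd, of r] unfolding \<sigma>_def by auto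
      thus "r \<in> C" using r st by (auto simp: B_def C_def)
    qed
    ultimately have "closure {0..<\<sigma>} \<subseteq> C" by (simp add: closure_minimal)
    hence "{0..\<sigma>} \<subseteq> C" using False s0 by simp
    thus ?thesis using s0 by (auto simp: C_def)
  qed
  have "\<exists>c. \<sigma> < c \<and> c < \<sigma> + b \<and> y c < F c" if b: "0 < b" for b
  proof -
    obtain c where cB: "c \<in> B" and cl: "c < \<sigma> + b"
      using cInf_lessD[OF Bne, of "\<sigma> + b"] b unfolding \<sigma>_def by auto
    have "\<sigma> \<le> c" unfolding \<sigma>_def by (rule cInf_lower[OF cB Bbd])
    moreover have "c \<noteq> \<sigma>" using cB Fs by (auto simp: B_def)
    ultimately have "\<sigma> < c" by simp
    thus ?thesis using cB cl by (auto simp: B_def)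
  qed
  with s0 Fs that show ?thesis by blast
qed

text \<open>Comparison argument: by \<open>first_exceedance\<close>, \<open>F\<close> never overtakes the function
  \<open>(F 0 + \<eta>) e^{(K + 1) t}\<close>, for any \<open>\<eta> > 0\<close>.\<close>

lemma dini_gronwall:
  fixes F :: "real \<Rightarrow> real" and K :: real
  assumes cont: "continuous_on {0..} F" and K0: "0 \<le> K" and F00: "0 \<le> F 0"
    and D: "\<And>t e. 0 \<le> t \<Longrightarrow> 0 < e \<Longrightarrow> eventually (\<lambda>h. F (t + h) \<le> F t + (K * F t + e) * h) (at_right 0)"
    and t: "0 \<le> t"
  shows "F t \<le> F 0 * exp ((K + 1) * t)"
proof -
  have main: "F t \<le> (F 0 + \<eta>) * exp ((K + 1) * t)" if eta: "0 < \<eta>" for \<eta>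
  proof (rule ccontr)
    define y where "y r = (F 0 + \<eta>) * exp ((K + 1) * r)" for r
    assume "\<not> F t \<le> (F 0 + \<eta>) * exp ((K + 1) * t)"
    hence "y t < F t" by (simp add: y_def)
    moreover have "continuous_on {0..t} y" unfolding y_def[abs_def] by (intro continuous_intros)
    moreover have "continuous_on {0..t} F" by (rule continuous_on_subset[OF cont]) auto
    ultimately obtain \<sigma> where s0: "0 \<le> \<sigma>" and Fs: "F \<sigma> \<le> y \<sigma>"
      and exceed: "\<And>b. 0 < b \<Longrightarrow> \<exists>c. \<sigma> < c \<and> c < \<sigma> + b \<and> y c < F c"
      using first_exceedance[of t F y] t eta by (auto simp: y_def)
    have y_ge: "\<eta> \<le> y \<sigma>"
    proof -
      have "(F 0 + \<eta>) * 1 \<le> (F 0 + \<eta>) * exp ((K + 1) * \<sigma>)"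
        using s0 K0 F00 eta by (intro mult_left_mono) auto
      thus ?thesis using F00 by (simp add: y_def)
    qed
    obtain b where b0: "0 < b" and bD: "\<And>h. 0 < h \<Longrightarrow> h < b \<Longrightarrow> F (\<sigma> + h) \<le> F \<sigma> + (K * F \<sigma> + \<eta>) * h"
      using D[OF s0 eta] unfolding eventually_at_right_field by auto
    have after: "F (\<sigma> + h) \<le> y (\<sigma> + h)" if h: "0 < h" "h < b" for h
    proof -
      have "F (\<sigma> + h) \<le> F \<sigma> + (K * F \<sigma> + \<eta>) * h" by (rule bD[OF h])
      also have "\<dots> \<le> y \<sigma> + (K * y \<sigma> + \<eta>) * h"
        using Fs K0 h by (intro add_mono mult_right_mono mult_left_mono) auto
      also have "\<dots> \<le> y \<sigma> + (K * y \<sigma> + y \<sigma>) * h"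
        using y_ge h by (intro add_left_mono mult_right_mono) auto
      also have "\<dots> = y \<sigma> * (1 + (K + 1) * h)" by (simp add: algebra_simps)
      also have "\<dots> \<le> y \<sigma> * exp ((K + 1) * h)"
        using y_ge eta by (intro mult_left_mono exp_ge_add_one_self) auto
      also have "\<dots> = y (\<sigma> + h)" by (simp add: y_def distrib_left exp_add)
      finally show ?thesis .
    qed
    obtain c where "\<sigma> < c" "c < \<sigma> + b" "y c < F c" using exceed[OF b0] by blast
    with after[of "c - \<sigma>"] show False by simp
  qed
  show ?thesis
  proof (rule field_le_epsilon)
    fix e :: real assume e: "0 < e"
    define E where "E = exp ((K + 1) * t)"
    have E0: "0 < E" by (simp add: E_def)
    have "F t \<le> (F 0 + e / E) * E" using main[of "e / E"] e E0 by (simp add: E_def)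
    also have "\<dots> = F 0 * E + e" using E0 by (simp add: field_simps)
    finally show "F t \<le> F 0 * exp ((K + 1) * t) + e" by (simp add: E_def)
  qed
qed

section \<open>Estimates along the semigroup\<close>

locale G_semigroup =
  fixes k :: nat and \<alpha> \<kappa> :: real and T :: "real \<Rightarrow> fock \<Rightarrow> fock"
  assumes k1: "k \<ge> 1" and kap: "\<kappa> > 0" and C0: "C0_contraction_semigroup T"
    and gen: "generator_graph T (closure_graph (Hpq (2 * k) 2) (op_G k \<alpha> \<kappa>))"
begin

lemma T_Hspace: "0 \<le> t \<Longrightarrow> \<psi> \<in> Hspace \<Longrightarrow> T t \<psi> \<in> Hspace"
  and T_linear: "0 \<le> t \<Longrightarrow> \<psi> \<in> Hspace \<Longrightarrow> \<phi> \<in> Hspace \<Longrightarrow>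
      T t (\<lambda>x. c * \<psi> x + \<phi> x) = (\<lambda>x. c * T t \<psi> x + T t \<phi> x)"
  and T_0: "\<psi> \<in> Hspace \<Longrightarrow> T 0 \<psi> = \<psi>"
  and T_add: "0 \<le> s \<Longrightarrow> 0 \<le> t \<Longrightarrow> \<psi> \<in> Hspace \<Longrightarrow> T (s + t) \<psi> = T s (T t \<psi>)"
  and T_contraction: "0 \<le> t \<Longrightarrow> \<psi> \<in> Hspace \<Longrightarrow> Hnorm (T t \<psi>) \<le> Hnorm \<psi>"
  and T_continuous: "\<psi> \<in> Hspace \<Longrightarrow> 0 \<le> t \<Longrightarrow>
      ((\<lambda>s. Hnorm (\<lambda>x. T s \<psi> x - T t \<psi> x)) \<longlongrightarrow> 0) (at t within {0..})"
  using C0 unfolding C0_contraction_semigroup_def by blast+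

lemma T_zero: "0 \<le> t \<Longrightarrow> T t (\<lambda>x. 0) = (\<lambda>x. 0)"
  using T_linear[of t "\<lambda>x. 0" "\<lambda>x. 0" "-1"] Hspace_zero by simp

lemma T_scale: "0 \<le> t \<Longrightarrow> \<psi> \<in> Hspace \<Longrightarrow> T t (\<lambda>x. c * \<psi> x) = (\<lambda>x. c * T t \<psi> x)"
  using T_linear[of t \<psi> "\<lambda>x. 0" c] Hspace_zero T_zero by simp

lemma T_diff: "0 \<le> t \<Longrightarrow> a \<in> Hspace \<Longrightarrow> b \<in> Hspace \<Longrightarrow> T t (\<lambda>x. a x - b x) = (\<lambda>x. T t a x - T t b x)"
  using T_linear[of t b a "-1"] by simp

lemma T_difference_quotient:
  assumes t: "0 \<le> t" and H: "a \<in> Hspace" "b \<in> Hspace" "d \<in> Hspace"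
  shows "T t (\<lambda>x. (a x - b x) / complex_of_real h - d x)
       = (\<lambda>x. (T t a x - T t b x) / complex_of_real h - T t d x)"
proof -
  have ab: "(\<lambda>x. a x - b x) \<in> Hspace" by (rule Hspace_diff[OF H(1,2)])
  have "T t (\<lambda>x. (a x - b x) / complex_of_real h - d x)
      = T t (\<lambda>x. inverse (complex_of_real h) * (a x - b x) - d x)"
    by (simp add: divide_inverse mult.commute)
  also have "\<dots> = (\<lambda>x. inverse (complex_of_real h) * T t (\<lambda>x. a x - b x) x - T t d x)"
    using T_diff[OF t Hspace_scale[OF ab] H(3)] T_scale[OF t ab] by simp
  also have "\<dots> = (\<lambda>x. (T t a x - T t b x) / complex_of_real h - T t d x)"
    by (simp add: T_diff[OF t H(1,2)] divide_inverse mult.commute)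
  finally show ?thesis .
qed

lemma op_G_graph_in_closure_graph: "\<psi> \<in> Hpq (2 * k) 2 \<Longrightarrow> (\<psi>, op_G k \<alpha> \<kappa> \<psi>) \<in> closure_graph (Hpq (2 * k) 2) (op_G k \<alpha> \<kappa>)"
  unfolding closure_graph_def using Hpq_subset_Hspace op_G_in_Hspace[OF k1]
  by (auto intro!: exI[of _ "\<lambda>j. \<psi>"] simp: Hnorm_zero)

lemma generator_tendsto:
  "(\<psi>, \<phi>) \<in> closure_graph (Hpq (2 * k) 2) (op_G k \<alpha> \<kappa>) \<Longrightarrow>
     ((\<lambda>h. Hnorm (\<lambda>x. (T h \<psi> x - \<psi> x) / complex_of_real h - \<phi> x)) \<longlongrightarrow> 0) (at_right 0)"
  using gen unfolding generator_graph_def by blast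

lemma orbit_right_derivative:
  assumes \<psi>: "\<psi> \<in> Hpq (2 * k) 2" and t: "0 \<le> t"
  shows "((\<lambda>h. Hnorm (\<lambda>x. (T (t + h) \<psi> x - T t \<psi> x) / complex_of_real h - T t (op_G k \<alpha> \<kappa> \<psi>) x))
           \<longlongrightarrow> 0) (at_right 0)"
    and "(T t \<psi>, T t (op_G k \<alpha> \<kappa> \<psi>)) \<in> closure_graph (Hpq (2 * k) 2) (op_G k \<alpha> \<kappa>)"
proof -
  have pH: "\<psi> \<in> Hspace" by (rule Hpq_subset_Hspace[OF \<psi>])
  have gH: "op_G k \<alpha> \<kappa> \<psi> \<in> Hspace" by (rule op_G_in_Hspace[OF k1 \<psi>])
  have ev: "\<forall>\<^sub>F h in at_right 0.
      norm (Hnorm (\<lambda>x. (T (t + h) \<psi> x - T t \<psi> x) / complex_of_real h - T t (op_G k \<alpha> \<kappa> \<psi>) x))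
       \<le> Hnorm (\<lambda>x. (T h \<psi> x - \<psi> x) / complex_of_real h - op_G k \<alpha> \<kappa> \<psi> x)"
  proof (rule eventually_mono[OF eventually_at_right_less])
    fix h :: real assume h: "0 < h"
    have inH: "(\<lambda>x. (T h \<psi> x - \<psi> x) / complex_of_real h - op_G k \<alpha> \<kappa> \<psi> x) \<in> Hspace"
      using Hspace_diff[OF Hspace_scale[OF Hspace_diff[OF T_Hspace[OF _ pH, of h] pH],
            of "inverse (complex_of_real h)"] gH] h
      by (simp add: divide_inverse mult.commute)
    have "T (t + h) \<psi> = T t (T h \<psi>)" using T_add[OF t _ pH, of h] h by simp
    hence "(\<lambda>x. (T (t + h) \<psi> x - T t \<psi> x) / complex_of_real h - T t (op_G k \<alpha> \<kappa> \<psi>) x)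
         = T t (\<lambda>x. (T h \<psi> x - \<psi> x) / complex_of_real h - op_G k \<alpha> \<kappa> \<psi> x)"
      using T_difference_quotient[OF t T_Hspace[OF _ pH, of h] pH gH, of h] h by simp
    thus "norm (Hnorm (\<lambda>x. (T (t + h) \<psi> x - T t \<psi> x) / complex_of_real h - T t (op_G k \<alpha> \<kappa> \<psi>) x))
       \<le> Hnorm (\<lambda>x. (T h \<psi> x - \<psi> x) / complex_of_real h - op_G k \<alpha> \<kappa> \<psi> x)"
      using T_contraction[OF t inH] Hnorm_nonneg by simp
  qed
  show L: "((\<lambda>h. Hnorm (\<lambda>x. (T (t + h) \<psi> x - T t \<psi> x) / complex_of_real h - T t (op_G k \<alpha> \<kappa> \<psi>) x))
           \<longlongrightarrow> 0) (at_right 0)"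
    by (rule Lim_null_comparison[OF ev generator_tendsto[OF op_G_graph_in_closure_graph[OF \<psi>]]])
  have "\<forall>\<^sub>F h in at_right 0.
      Hnorm (\<lambda>x. (T (t + h) \<psi> x - T t \<psi> x) / complex_of_real h - T t (op_G k \<alpha> \<kappa> \<psi>) x)
    = Hnorm (\<lambda>x. (T h (T t \<psi>) x - T t \<psi> x) / complex_of_real h - T t (op_G k \<alpha> \<kappa> \<psi>) x)"
    using T_add[OF _ t pH] by (intro eventually_mono[OF eventually_at_right_less]) (simp add: add.commute)
  from Lim_transform_eventually[OF L this]
  have "((\<lambda>h. Hnorm (\<lambda>x. (T h (T t \<psi>) x - T t \<psi> x) / complex_of_real h - T t (op_G k \<alpha> \<kappa> \<psi>) x))
           \<longlongrightarrow> 0) (at_right 0)" .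
  thus "(T t \<psi>, T t (op_G k \<alpha> \<kappa> \<psi>)) \<in> closure_graph (Hpq (2 * k) 2) (op_G k \<alpha> \<kappa>)"
    using gen T_Hspace[OF t pH] T_Hspace[OF t gH] unfolding generator_graph_def by blast
qed

lemma Re_weighted_inner_closure_le:
  assumes VW: "shift_weight V R k" and uv: "(u, v) \<in> closure_graph (Hpq (2 * k) 2) (op_G k \<alpha> \<kappa>)"
  shows "Re (weighted_inner V u v) \<le> dissipation_const k \<alpha> \<kappa> * wsum V u"
proof -
  interpret W: shift_weight V R k by (fact VW)
  obtain sq where uH: "u \<in> Hspace" and vH: "v \<in> Hspace" and sqD: "\<And>j. sq j \<in> Hpq (2 * k) 2"
    and la: "(\<lambda>j. Hnorm (\<lambda>x. sq j x - u x)) \<longlonglongrightarrow> 0"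
    and lb: "(\<lambda>j. Hnorm (\<lambda>x. op_G k \<alpha> \<kappa> (sq j) x - v x)) \<longlonglongrightarrow> 0"
    using uv unfolding closure_graph_def by blast
  have "(\<lambda>j. Re (weighted_inner V (sq j) (op_G k \<alpha> \<kappa> (sq j)))) \<longlonglongrightarrow> Re (weighted_inner V u v)"
    using Hpq_subset_Hspace[OF sqD] op_G_in_Hspace[OF k1 sqD]
    by (intro tendsto_Re W.tendsto_weighted_inner[OF uH vH _ la lb]) simp
  moreover have "(\<lambda>j. dissipation_const k \<alpha> \<kappa> * Re (weighted_inner V (sq j) (sq j)))
      \<longlonglongrightarrow> dissipation_const k \<alpha> \<kappa> * Re (weighted_inner V u u)"
    using Hpq_subset_Hspace[OF sqD]
    by (intro tendsto_mult_left tendsto_Re W.tendsto_weighted_inner[OF uH uH _ la la]) simp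
  moreover have "Re (weighted_inner V (sq j) (op_G k \<alpha> \<kappa> (sq j))) \<le> dissipation_const k \<alpha> \<kappa> * Re (weighted_inner V (sq j) (sq j))"
    for j
    using W.Re_weighted_inner_op_G_le[OF sqD kap, where \<alpha>=\<alpha>] by (simp add: weighted_inner_self)
  ultimately have "Re (weighted_inner V u v) \<le> dissipation_const k \<alpha> \<kappa> * Re (weighted_inner V u u)"
    by (intro tendsto_le[OF trivial_limit_sequentially]) auto
  thus ?thesis by (simp add: weighted_inner_self)
qed

lemma wsum_orbit_continuous:
  assumes VW: "bounded_weight V R" and pH: "\<psi> \<in> Hspace"
  shows "continuous_on {0..} (\<lambda>r. wsum V (T r \<psi>))"
  unfolding continuous_on_def
proof (intro ballI)
  interpret W: bounded_weight V R by (fact VW)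
  fix t :: real assume "t \<in> {0..}"
  hence t: "0 \<le> t" by simp
  have "\<forall>\<^sub>F r in at t within {0..}. T r \<psi> \<in> Hspace \<and> T r \<psi> \<in> Hspace"
    unfolding eventually_at using T_Hspace[OF _ pH] by (auto intro!: exI[of _ 1])
  hence "((\<lambda>r. Re (weighted_inner V (T r \<psi>) (T r \<psi>))) \<longlongrightarrow> Re (weighted_inner V (T t \<psi>) (T t \<psi>))) (at t within {0..})"
    by (intro tendsto_Re W.tendsto_weighted_inner T_Hspace[OF t pH] T_continuous[OF pH t])
  thus "((\<lambda>r. wsum V (T r \<psi>)) \<longlongrightarrow> wsum V (T t \<psi>)) (at t within {0..})"
    by (simp add: weighted_inner_self)
qed

lemma wsum_orbit_dini:
  assumes VW: "shift_weight V R k" and \<psi>: "\<psi> \<in> Hpq (2 * k) 2" and t: "0 \<le> t" and e: "0 < e"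
  shows "\<forall>\<^sub>F h in at_right 0.
           wsum V (T (t + h) \<psi>) \<le> wsum V (T t \<psi>) + (2 * dissipation_const k \<alpha> \<kappa> * wsum V (T t \<psi>) + e) * h"
proof -
  interpret W: shift_weight V R k by (fact VW)
  have pH: "\<psi> \<in> Hspace" by (rule Hpq_subset_Hspace[OF \<psi>])
  define c where "c = dissipation_const k \<alpha> \<kappa>"
  define u where "u = T t \<psi>"
  define v where "v = T t (op_G k \<alpha> \<kappa> \<psi>)"
  define w where "w h = (\<lambda>x. (T (t + h) \<psi> x - u x) / complex_of_real h)" for h
  define E where "E h = 2 * R * Hnorm u * Hnorm (\<lambda>x. w h x - v x)
                      + h * R * (Hnorm v + Hnorm (\<lambda>x. w h x - v x))\<^sup>2" for h
  have uH: "u \<in> Hspace" unfolding u_def by (rule T_Hspace[OF t pH])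
  have vH: "v \<in> Hspace" unfolding v_def by (rule T_Hspace[OF t op_G_in_Hspace[OF k1 \<psi>]])
  have wH: "w h \<in> Hspace" if "0 < h" for h
    using Hspace_scale[OF Hspace_diff[OF T_Hspace[OF _ pH, of "t + h"] uH], of "inverse (complex_of_real h)"] that t
    by (simp add: w_def divide_inverse mult.commute)
  have L: "((\<lambda>h. Hnorm (\<lambda>x. w h x - v x)) \<longlongrightarrow> 0) (at_right 0)"
    using orbit_right_derivative(1)[OF \<psi> t] by (simp add: w_def u_def v_def)
  have "(E \<longlongrightarrow> 2 * R * Hnorm u * 0 + 0 * R * (Hnorm v + 0)\<^sup>2) (at_right 0)"
    unfolding E_def[abs_def]
    by (rule tendsto_add[OF tendsto_mult[OF tendsto_const L]
           tendsto_mult[OF tendsto_mult[OF tendsto_ident_at tendsto_const] tendsto_power[OF tendsto_add[OF tendsto_const L]]]])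
  hence "(E \<longlongrightarrow> 0) (at_right 0)" by simp
  hence ev: "\<forall>\<^sub>F h in at_right 0. E h < e \<and> 0 < h"
    by (intro eventually_conj order_tendstoD(2)[OF _ e] eventually_at_right_less)
  have cl: "Re (weighted_inner V u v) \<le> c * wsum V u"
    unfolding c_def u_def v_def by (rule Re_weighted_inner_closure_le[OF VW orbit_right_derivative(2)[OF \<psi> t]])
  show ?thesis
  proof (rule eventually_mono[OF ev])
    fix h :: real assume "E h < e \<and> 0 < h"
    hence h: "0 < h" and Eh: "E h < e" by auto
    have "T (t + h) \<psi> = (\<lambda>x. u x + complex_of_real h * w h x)"
      using h by (simp add: w_def)
    hence "wsum V (T (t + h) \<psi>) \<le> wsum V u + (2 * c * wsum V u + E h) * h"
      using W.wsum_add_scaled_le[OF uH vH wH[OF h] _ cl, of h] h by (simp add: E_def algebra_simps)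
    also have "\<dots> \<le> wsum V u + (2 * c * wsum V u + e) * h"
      using Eh h by (intro add_left_mono mult_right_mono) auto
    finally show "wsum V (T (t + h) \<psi>) \<le> wsum V (T t \<psi>) + (2 * dissipation_const k \<alpha> \<kappa> * wsum V (T t \<psi>) + e) * h"
      by (simp add: c_def u_def)
  qed
qed

abbreviation growth_rate :: real where
  "growth_rate \<equiv> 2 * dissipation_const k \<alpha> \<kappa> + 1"

lemma growth_rate_nonneg: "0 \<le> growth_rate"
  using dissipation_const_nonneg[OF kap] by simp

lemma wsum_orbit_le:
  assumes VW: "shift_weight V R k" and \<psi>: "\<psi> \<in> Hpq (2 * k) 2" and t: "0 \<le> t"
  shows "wsum V (T t \<psi>) \<le> wsum V \<psi> * exp (growth_rate * t)"
proof -
  interpret W: shift_weight V R k by (fact VW)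
  have pH: "\<psi> \<in> Hspace" by (rule Hpq_subset_Hspace[OF \<psi>])
  have "wsum V (T t \<psi>) \<le> wsum V (T 0 \<psi>) * exp (growth_rate * t)"
    using dissipation_const_nonneg[OF kap]
    by (intro dini_gronwall[where F="\<lambda>r. wsum V (T r \<psi>)", OF wsum_orbit_continuous[OF W.bounded_weight_axioms pH]
          _ _ wsum_orbit_dini[OF VW \<psi>] t])
       (auto simp: wsum_def W.nonneg intro: infsum_nonneg)
  thus ?thesis using T_0[OF pH] by simp
qed

lemma wsum_poly_weight_orbit:
  assumes \<psi>: "\<psi> \<in> Hpq (2 * k) (2 * k)" and t: "0 \<le> t"
  shows "(\<lambda>x. poly_weight k x * (cmod (T t \<psi> x))\<^sup>2) summable_on UNIV"
    and "wsum (poly_weight k) (T t \<psi>) \<le> wsum (poly_weight k) \<psi> * exp (growth_rate * t)"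
proof -
  have pH: "\<psi> \<in> Hspace" by (rule Hpq_subset_Hspace[OF \<psi>])
  define B where "B = wsum (poly_weight k) \<psi> * exp (growth_rate * t)"
  have fin: "(\<Sum>x\<in>F. poly_weight k x * (cmod (T t \<psi> x))\<^sup>2) \<le> B" if F: "finite F" for F
  proof -
    define R where "R = (\<Sum>x\<in>F. poly_weight k x)"
    have R0: "0 \<le> R" unfolding R_def by (rule sum_nonneg) (simp add: poly_weight_nonneg)
    interpret W: shift_weight "trunc_weight k R" R k by (rule trunc_weight_shift_weight[OF k1 R0])
    have "(\<Sum>x\<in>F. poly_weight k x * (cmod (T t \<psi> x))\<^sup>2) = (\<Sum>x\<in>F. trunc_weight k R x * (cmod (T t \<psi> x))\<^sup>2)"
    proof (rule sum.cong)
      fix x assume "x \<in> F"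
      hence "poly_weight k x \<le> R" unfolding R_def by (intro member_le_sum) (auto simp: poly_weight_nonneg F)
      thus "poly_weight k x * (cmod (T t \<psi> x))\<^sup>2 = trunc_weight k R x * (cmod (T t \<psi> x))\<^sup>2"
        by (simp add: trunc_weight_def)
    qed simp
    also have "\<dots> \<le> wsum (trunc_weight k R) (T t \<psi>)"
      unfolding wsum_def
      by (rule finite_sum_le_infsum[OF W.wsum_summable[OF T_Hspace[OF t pH]] F]) (simp_all add: W.nonneg)
    also have "\<dots> \<le> wsum (trunc_weight k R) \<psi> * exp (growth_rate * t)"
      by (rule wsum_orbit_le[OF W.shift_weight_axioms Hpq_2k_subset[OF k1 \<psi>] t])
    also have "\<dots> \<le> B"
      unfolding B_def wsum_def
      by (intro mult_right_mono infsum_mono[OF W.wsum_summable[OF pH] poly_weight_summable[OF k1 \<psi>]])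
         (auto simp: trunc_weight_def intro: mult_right_mono)
    finally show ?thesis .
  qed
  show sm: "(\<lambda>x. poly_weight k x * (cmod (T t \<psi> x))\<^sup>2) summable_on UNIV"
    using fin by (intro nonneg_bdd_above_summable_on bdd_aboveI2[of _ _ B]) (auto simp: poly_weight_nonneg)
  show "wsum (poly_weight k) (T t \<psi>) \<le> wsum (poly_weight k) \<psi> * exp (growth_rate * t)"
    using infsum_le_finite_sums[OF sm fin] by (simp add: B_def wsum_def)
qed

lemma Hpq_invariant: "\<psi> \<in> Hpq (2 * k) (2 * k) \<Longrightarrow> 0 \<le> t \<Longrightarrow> T t \<psi> \<in> Hpq (2 * k) (2 * k)"
  by (rule Hpq_if_poly_weight_summable[OF k1 wsum_poly_weight_orbit(1)])

lemma tendsto_wsum_poly_weight_orbit_0: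
  assumes \<psi>: "\<psi> \<in> Hpq (2 * k) (2 * k)"
  shows "((\<lambda>h. wsum (poly_weight k) (\<lambda>x. T h \<psi> x - \<psi> x)) \<longlongrightarrow> 0) (at_right 0)"
proof (rule order_tendstoI)
  fix a :: real assume "a < 0"
  thus "\<forall>\<^sub>F h in at_right 0. a < wsum (poly_weight k) (\<lambda>x. T h \<psi> x - \<psi> x)"
    using wsum_nonneg[OF poly_weight_nonneg] by (intro always_eventually allI) (meson less_le_trans)
next
  fix a :: real assume a: "0 < a"
  have pH: "\<psi> \<in> Hspace" by (rule Hpq_subset_Hspace[OF \<psi>])
  obtain R where R0: "0 \<le> R" and tail: "wsum (\<lambda>x. poly_weight k x - trunc_weight k R x) \<psi> < a / 4"
    using truncation_error_small[OF poly_weight_summable[OF k1 \<psi>], of "a / 4"] a by auto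
  interpret W: shift_weight "trunc_weight k R" R k by (rule trunc_weight_shift_weight[OF k1 R0])
  define P where "P = wsum (poly_weight k) \<psi>"
  define U where "U h = R * (Hnorm (\<lambda>x. T h \<psi> x - \<psi> x))\<^sup>2
      + 2 * (P * exp (growth_rate * h) - wsum (trunc_weight k R) (T h \<psi>))
      + 2 * (P - wsum (trunc_weight k R) \<psi>)" for h
  have sub: "{0<..} \<subseteq> {0::real..}" by auto
  have "((\<lambda>h. Hnorm (\<lambda>x. T h \<psi> x - \<psi> x)) \<longlongrightarrow> 0) (at_right 0)"
    using tendsto_within_subset[OF T_continuous[OF pH order_refl] sub] T_0[OF pH] by simp
  moreover have "((\<lambda>h. wsum (trunc_weight k R) (T h \<psi>)) \<longlongrightarrow> wsum (trunc_weight k R) \<psi>) (at_right 0)"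
  proof -
    have "((\<lambda>h. wsum (trunc_weight k R) (T h \<psi>)) \<longlongrightarrow> wsum (trunc_weight k R) (T 0 \<psi>)) (at 0 within {0..})"
      using wsum_orbit_continuous[OF W.bounded_weight_axioms pH] unfolding continuous_on_def by auto
    thus ?thesis using tendsto_within_subset[OF _ sub] T_0[OF pH] by simp
  qed
  moreover have "((\<lambda>h. exp (growth_rate * h)) \<longlongrightarrow> 1) (at_right 0)"
    using tendsto_exp[OF tendsto_mult[OF tendsto_const tendsto_ident_at], of growth_rate 0 "{0<..}"] by simp
  ultimately have "(U \<longlongrightarrow> R * 0\<^sup>2 + 2 * (P * 1 - wsum (trunc_weight k R) \<psi>) + 2 * (P - wsum (trunc_weight k R) \<psi>))
      (at_right 0)"
    unfolding U_def[abs_def] by (intro tendsto_intros)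
  hence UL: "(U \<longlongrightarrow> 4 * (P - wsum (trunc_weight k R) \<psi>)) (at_right 0)" by simp
  have "4 * (P - wsum (trunc_weight k R) \<psi>) < a"
    using tail wsum_weight_diff[OF poly_weight_summable[OF k1 \<psi>] W.wsum_summable[OF pH]] by (simp add: P_def)
  hence "\<forall>\<^sub>F h in at_right 0. U h < a \<and> 0 < h"
    by (intro eventually_conj order_tendstoD(2)[OF UL] eventually_at_right_less)
  thus "\<forall>\<^sub>F h in at_right 0. wsum (poly_weight k) (\<lambda>x. T h \<psi> x - \<psi> x) < a"
  proof (rule eventually_mono)
    fix h :: real assume h: "U h < a \<and> 0 < h"
    have "wsum (poly_weight k) (\<lambda>x. T h \<psi> x - \<psi> x) \<le> U h"
      using wsum_poly_weight_diff_le[OF k1 R0 Hpq_invariant[OF \<psi>] \<psi>, of h]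
        wsum_poly_weight_orbit(2)[OF \<psi>, of h] h
      by (simp add: U_def P_def)
    thus "wsum (poly_weight k) (\<lambda>x. T h \<psi> x - \<psi> x) < a" using h by simp
  qed
qed

lemma Hpq_norm_orbit_le:
  assumes \<psi>: "\<psi> \<in> Hpq (2 * k) (2 * k)" and t: "0 \<le> t"
  shows "Hpq_norm (2 * k) (2 * k) (T t \<psi>)
       \<le> sqrt (3 * poly_weight_const k * exp (growth_rate * t)) * Hpq_norm (2 * k) (2 * k) \<psi>"
proof -
  define c where "c = 3 * poly_weight_const k * exp (growth_rate * t)"
  have c0: "0 \<le> c" by (simp add: c_def poly_weight_const_def)
  have "(Hpq_norm (2 * k) (2 * k) (T t \<psi>))\<^sup>2 \<le> 3 * wsum (poly_weight k) (T t \<psi>)"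
    unfolding Hpq_norm_sq by (rule wsum_wpq_le_poly_weight[OF k1 Hpq_invariant[OF \<psi> t]])
  also have "\<dots> \<le> 3 * (wsum (poly_weight k) \<psi> * exp (growth_rate * t))"
    using wsum_poly_weight_orbit(2)[OF \<psi> t] by simp
  also have "\<dots> \<le> 3 * (poly_weight_const k * wsum (wpq (2 * k) (2 * k)) \<psi> * exp (growth_rate * t))"
    using mult_right_mono[OF wsum_poly_weight_le_wpq[OF k1 \<psi>], of "exp (growth_rate * t)"] by simp
  also have "\<dots> = c * (Hpq_norm (2 * k) (2 * k) \<psi>)\<^sup>2"
    unfolding Hpq_norm_sq c_def by (simp only: mult_ac)
  also have "\<dots> = (sqrt c * Hpq_norm (2 * k) (2 * k) \<psi>)\<^sup>2"
    using c0 by (simp only: power_mult_distrib real_sqrt_pow2)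
  finally have "(Hpq_norm (2 * k) (2 * k) (T t \<psi>))\<^sup>2 \<le> (sqrt c * Hpq_norm (2 * k) (2 * k) \<psi>)\<^sup>2" .
  moreover have "0 \<le> sqrt c * Hpq_norm (2 * k) (2 * k) \<psi>" using Hpq_norm_nonneg c0 by simp
  ultimately show ?thesis unfolding c_def by (rule power2_le_imp_le)
qed

lemma wsum_poly_weight_orbit_diff_le:
  assumes \<psi>: "\<psi> \<in> Hpq (2 * k) (2 * k)" and t: "0 \<le> t" and s: "0 \<le> s"
  shows "wsum (poly_weight k) (\<lambda>x. T s \<psi> x - T t \<psi> x)
       \<le> exp (growth_rate * t) * wsum (poly_weight k) (\<lambda>x. T \<bar>s - t\<bar> \<psi> x - \<psi> x)"
proof -
  have pH: "\<psi> \<in> Hspace" by (rule Hpq_subset_Hspace[OF \<psi>])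
  have shifted: "wsum (poly_weight k) (\<lambda>x. T (r + h) \<psi> x - T r \<psi> x)
      \<le> exp (growth_rate * t) * wsum (poly_weight k) (\<lambda>x. T h \<psi> x - \<psi> x)"
    if r: "0 \<le> r" "r \<le> t" and h: "0 \<le> h" for r h
  proof -
    define \<phi> where "\<phi> = (\<lambda>x. T h \<psi> x - \<psi> x)"
    have \<phi>: "\<phi> \<in> Hpq (2 * k) (2 * k)" unfolding \<phi>_def by (intro Hpq_diff Hpq_invariant \<psi> h)
    have "T (r + h) \<psi> = T r (T h \<psi>)" by (rule T_add[OF r(1) h pH])
    hence "(\<lambda>x. T (r + h) \<psi> x - T r \<psi> x) = T r \<phi>"
      unfolding \<phi>_def using T_diff[OF r(1) T_Hspace[OF h pH] pH] by simp
    hence "wsum (poly_weight k) (\<lambda>x. T (r + h) \<psi> x - T r \<psi> x) \<le> wsum (poly_weight k) \<phi> * exp (growth_rate * r)"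
      using wsum_poly_weight_orbit(2)[OF \<phi> r(1)] by simp
    also have "\<dots> \<le> wsum (poly_weight k) \<phi> * exp (growth_rate * t)"
      using mult_left_mono[OF r(2) growth_rate_nonneg] wsum_nonneg[OF poly_weight_nonneg, where s=\<phi>]
      by (intro mult_left_mono) simp_all
    finally show ?thesis by (simp add: \<phi>_def mult.commute)
  qed
  show ?thesis
  proof (cases "t \<le> s")
    case True
    thus ?thesis using shifted[of t "s - t"] t by simp
  next
    case False
    have "wsum (poly_weight k) (\<lambda>x. T s \<psi> x - T t \<psi> x) = wsum (poly_weight k) (\<lambda>x. T t \<psi> x - T s \<psi> x)"
      unfolding wsum_def by (simp add: norm_minus_commute)
    thus ?thesis using shifted[of s "t - s"] s False by simp
  qed
qed

lemma Hpq_norm_orbit_continuous: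
  assumes \<psi>: "\<psi> \<in> Hpq (2 * k) (2 * k)" and t: "0 \<le> t"
  shows "((\<lambda>s. Hpq_norm (2 * k) (2 * k) (\<lambda>x. T s \<psi> x - T t \<psi> x)) \<longlongrightarrow> 0) (at t within {0..})"
proof (rule tendstoI)
  fix e :: real assume e: "0 < e"
  define c where "c = 3 * exp (growth_rate * t)"
  have c0: "0 < c" by (simp add: c_def)
  have "\<forall>\<^sub>F h in at_right 0. wsum (poly_weight k) (\<lambda>x. T h \<psi> x - \<psi> x) < e\<^sup>2 / c"
    by (rule order_tendstoD(2)[OF tendsto_wsum_poly_weight_orbit_0[OF \<psi>]]) (use e c0 in simp)
  then obtain b where b0: "0 < b"
    and bb: "\<And>h. 0 < h \<Longrightarrow> h < b \<Longrightarrow> wsum (poly_weight k) (\<lambda>x. T h \<psi> x - \<psi> x) < e\<^sup>2 / c"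
    unfolding eventually_at_right_field by auto
  show "\<forall>\<^sub>F s in at t within {0..}. dist (Hpq_norm (2 * k) (2 * k) (\<lambda>x. T s \<psi> x - T t \<psi> x)) 0 < e"
    unfolding eventually_at
  proof (intro exI[of _ b] conjI b0 ballI impI)
    fix s :: real assume "s \<in> {0..}" and st: "s \<noteq> t \<and> dist s t < b"
    hence s: "0 \<le> s" by simp
    have h: "0 < \<bar>s - t\<bar>" "\<bar>s - t\<bar> < b" using st by (auto simp: dist_real_def)
    have "(Hpq_norm (2 * k) (2 * k) (\<lambda>x. T s \<psi> x - T t \<psi> x))\<^sup>2
        \<le> 3 * wsum (poly_weight k) (\<lambda>x. T s \<psi> x - T t \<psi> x)"
      unfolding Hpq_norm_sq
      by (rule wsum_wpq_le_poly_weight[OF k1 Hpq_diff[OF Hpq_invariant[OF \<psi> s] Hpq_invariant[OF \<psi> t]]])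
    also have "\<dots> \<le> c * wsum (poly_weight k) (\<lambda>x. T \<bar>s - t\<bar> \<psi> x - \<psi> x)"
      using wsum_poly_weight_orbit_diff_le[OF \<psi> t s] by (simp add: c_def)
    also have "\<dots> < c * (e\<^sup>2 / c)"
      by (rule mult_strict_left_mono[OF bb[OF h] c0])
    also have "\<dots> = e\<^sup>2" using c0 by simp
    finally have "(Hpq_norm (2 * k) (2 * k) (\<lambda>x. T s \<psi> x - T t \<psi> x))\<^sup>2 < e\<^sup>2" .
    hence "Hpq_norm (2 * k) (2 * k) (\<lambda>x. T s \<psi> x - T t \<psi> x) < e"
      by (rule power2_less_imp_less) (use e in simp)
    thus "dist (Hpq_norm (2 * k) (2 * k) (\<lambda>x. T s \<psi> x - T t \<psi> x)) 0 < e"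
      using Hpq_norm_nonneg by (simp add: dist_real_def)
  qed
qed

end

theorem lemma5:
  fixes k :: nat and \<alpha> \<kappa> :: real and T :: "real \<Rightarrow> fock \<Rightarrow> fock"
  assumes "k \<ge> 1" and "\<kappa> > 0"
    and "C0_contraction_semigroup T"
    and "generator_graph T (closure_graph (Hpq (2 * k) 2) (op_G k \<alpha> \<kappa>))"
  shows "admissible_restriction T (Hpq (2 * k) (2 * k)) (Hpq_norm (2 * k) (2 * k))"
proof -
  interpret G_semigroup k \<alpha> \<kappa> T by (rule G_semigroup.intro) (fact assms)+
  show ?thesis
    unfolding admissible_restriction_def
  proof (intro conjI allI impI ballI)
    fix t :: real and \<psi> assume "0 \<le> t" "\<psi> \<in> Hpq (2 * k) (2 * k)"
    thus "T t \<psi> \<in> Hpq (2 * k) (2 * k)" by (rule Hpq_invariant[rotated])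
  next
    fix t :: real assume "0 \<le> t"
    thus "\<exists>C. \<forall>\<psi>\<in>Hpq (2 * k) (2 * k). Hpq_norm (2 * k) (2 * k) (T t \<psi>) \<le> C * Hpq_norm (2 * k) (2 * k) \<psi>"
      using Hpq_norm_orbit_le by blast
  next
    fix t :: real and \<psi> assume "\<psi> \<in> Hpq (2 * k) (2 * k)" "0 \<le> t"
    thus "((\<lambda>s. Hpq_norm (2 * k) (2 * k) (\<lambda>x. T s \<psi> x - T t \<psi> x)) \<longlongrightarrow> 0) (at t within {0..})"
      by (rule Hpq_norm_orbit_continuous)
  qed
qed

end
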